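(* Assume (A1). For all $x,y\in J$, $$\mathcal{D}_0(y,x)=\min\big(\mathcal{D}_{\mathrm{straight}}(y,x),\,\mathcal{D}_{\mathrm{junction}}(y,x)\big).$$
   Context: Junction: fix an integer $N\ge1$ and $N$ distinct unit vectors $e_1,\dots,e_N\in\mathbb{R}^2$. Set $J_i=[0,\infty)e_i$, $J_i^*=J_i\setminus\{0\}$, $J=\bigcup_{i=1}^NJ_i$, $I_N=\{1,\dots,N\}$. Each $x\in J_i$ is written $x=x_ie_i$, $x_i\ge0$. (A1): there is $\gamma>0$ with $L_i\in C^2(\mathbb{R})$, $L_i''\ge\gamma$ for each $i\in I_N$. $L_0(p)=\min_jL_j(p)$. Reduced minimal action: $A(x)=\mathbb{R}e_i$ if $x\in J_i^*$, $A(0)=\bigcup_i[0,\infty)e_i$; for $P=pe_i\in A(x)$, $L(x,P)=L_i(p)$ if $x\in J_i^*$, $L(0,P)=L_0(p)$. $\mathcal{A}(0,y;1,x)$ is the set of $X\in W^{1,1}([0,1];\mathbb{R}^2)$ with $X(\tau)\in J$, $\dot X(\tau)\in A(X(\tau))$ a.e., $X(0)=y$, $X(1)=x$; $\mathcal{D}_0(y,x)=\inf_{X\in\mathcal{A}(0,y;1,x)}\int_0^1L(X,\dot X)\,d\tau$. Auxiliary functions: $\mathcal{D}_{\mathrm{straight}}(y,x)=L_i(x_i-y_i)$ if $(y,x)\in J_i\times J_i\setminus\{(0,0)\}$ for some $i$; $=L_0(0)$ if $y=x=0$; $=+\infty$ otherwise. For $\tau\in[0,1]$: $\mathcal{E}_1(\tau,y)=\tau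 L_j(-y_j/\tau)-\tau L_0(0)$ if $y=y_je_j\ne0$ and $\tau\ne0$; $\mathcal{E}_1(\tau,0)=0$; $\mathcal{E}_1(0,y)=+\infty$ if $y\ne0$. $\mathcal{E}_2(\tau,x)=(1-\tau)L_i(x_i/(1-\tau))+\tau L_0(0)$ if $x=x_ie_i\ne0$ and $\tau\ne1$; $\mathcal{E}_2(\tau,0)=L_0(0)$; $\mathcal{E}_2(1,x)=+\infty$ if $x\ne0$. $\mathcal{D}_{\mathrm{junction}}(y,x)=\inf_{0\le\tau_1\le\tau_2\le1}\{\mathcal{E}_1(\tau_1,y)+\mathcal{E}_2(\tau_2,x)\}$. *)

theory Defs
  imports "HOL-Analysis.Analysis"
begin

definition ray :: "(nat \<Rightarrow> real^2) \<Rightarrow> nat \<Rightarrow> (real^2) set" where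
  "ray e i = {t *\<^sub>R e i | t. t \<ge> 0}"

definition junction :: "nat \<Rightarrow> (nat \<Rightarrow> real^2) \<Rightarrow> (real^2) set" where
  "junction N e = (\<Union>i\<in>{1..N}. ray e i)"

text \<open>Index of the branch containing a point (meaningful for nonzero points of J).\<close>
definition branch_idx :: "nat \<Rightarrow> (nat \<Rightarrow> real^2) \<Rightarrow> real^2 \<Rightarrow> nat" where
  "branch_idx N e x = (SOME i. i \<in> {1..N} \<and> x \<in> ray e i)"

definition L0 :: "nat \<Rightarrow> (nat \<Rightarrow> real \<Rightarrow> real) \<Rightarrow> real \<Rightarrow> real" where
  "L0 N L p = Min ((\<lambda>i. L i p) ` {1..N})"

definition adm_dir :: "nat \<Rightarrow> (nat \<Rightarrow> real^2) \<Rightarrow> real^2 \<Rightarrow> (real^2) set" where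
  "adm_dir N e x = (if x = 0 then junction N e
     else {t *\<^sub>R e (branch_idx N e x) | t. True})"

text \<open>Lagrangian L(x,P) for P in A(x): at x in J_i^*, P = p e_i and L = L_i(p);
  at 0, P = p e_j with p \<ge> 0, so p = norm P and L = L_0(p).\<close>
definition Lag :: "nat \<Rightarrow> (nat \<Rightarrow> real^2) \<Rightarrow> (nat \<Rightarrow> real \<Rightarrow> real) \<Rightarrow> real^2 \<Rightarrow> real^2 \<Rightarrow> real" where
  "Lag N e L x P = (if x = 0 then L0 N L (norm P)
     else L (branch_idx N e x) (P \<bullet> e (branch_idx N e x)))"

text \<open>Action of a path; the integrand is bounded below, so non-integrability means +oo.\<close>
definition path_cost :: "nat \<Rightarrow> (nat \<Rightarrow> real^2) \<Rightarrow> (nat \<Rightarrow> real \<Rightarrow> real)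
    \<Rightarrow> (real \<Rightarrow> real^2) \<Rightarrow> (real \<Rightarrow> real^2) \<Rightarrow> ereal" where
  "path_cost N e L X g =
     (if set_integrable lborel {0..1} (\<lambda>\<tau>. Lag N e L (X \<tau>) (g \<tau>))
      then ereal (set_lebesgue_integral lborel {0..1} (\<lambda>\<tau>. Lag N e L (X \<tau>) (g \<tau>)))
      else \<infinity>)"

text \<open>X in W^{1,1}([0,1]) with (weak) derivative g in L^1, i.e. X(t) = X(0) + int_0^t g,
  X(0) = y, X(1) = x, X(tau) in J and g(tau) in A(X(tau)) for a.e. tau.\<close>
definition admissible :: "nat \<Rightarrow> (nat \<Rightarrow> real^2) \<Rightarrow> real^2 \<Rightarrow> real^2
    \<Rightarrow> (real \<Rightarrow> real^2) \<Rightarrow> (real \<Rightarrow> real^2) \<Rightarrow> bool" where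
  "admissible N e y x X g \<longleftrightarrow>
     set_integrable lborel {0..1} g \<and>
     (\<forall>t\<in>{0..1}. X t = X 0 + set_lebesgue_integral lborel {0..t} g) \<and>
     X 0 = y \<and> X 1 = x \<and>
     (AE \<tau> in lborel. \<tau> \<in> {0..1} \<longrightarrow> X \<tau> \<in> junction N e \<and> g \<tau> \<in> adm_dir N e (X \<tau>))"

definition D0 :: "nat \<Rightarrow> (nat \<Rightarrow> real^2) \<Rightarrow> (nat \<Rightarrow> real \<Rightarrow> real) \<Rightarrow> real^2 \<Rightarrow> real^2 \<Rightarrow> ereal" where
  "D0 N e L y x = Inf {path_cost N e L X g | X g. admissible N e y x X g}"

definition Dstraight :: "nat \<Rightarrow> (nat \<Rightarrow> real^2) \<Rightarrow> (nat \<Rightarrow> real \<Rightarrow> real) \<Rightarrow> real^2 \<Rightarrow> real^2 \<Rightarrow> ereal" where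
  "Dstraight N e L y x =
     (if y = 0 \<and> x = 0 then ereal (L0 N L 0)
      else if \<exists>i\<in>{1..N}. y \<in> ray e i \<and> x \<in> ray e i then
        (let i = (SOME i. i \<in> {1..N} \<and> y \<in> ray e i \<and> x \<in> ray e i)
         in ereal (L i (x \<bullet> e i - y \<bullet> e i)))
      else \<infinity>)"

definition E1 :: "nat \<Rightarrow> (nat \<Rightarrow> real^2) \<Rightarrow> (nat \<Rightarrow> real \<Rightarrow> real) \<Rightarrow> real \<Rightarrow> real^2 \<Rightarrow> ereal" where
  "E1 N e L \<tau> y =
     (if y = 0 then 0
      else if \<tau> = 0 then \<infinity>
      else (let j = branch_idx N e y in
            ereal (\<tau> * L j (- (y \<bullet> e j) / \<tau>) - \<tau> * L0 N L 0)))"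

definition E2 :: "nat \<Rightarrow> (nat \<Rightarrow> real^2) \<Rightarrow> (nat \<Rightarrow> real \<Rightarrow> real) \<Rightarrow> real \<Rightarrow> real^2 \<Rightarrow> ereal" where
  "E2 N e L \<tau> x =
     (if x = 0 then ereal (L0 N L 0)
      else if \<tau> = 1 then \<infinity>
      else (let i = branch_idx N e x in
            ereal ((1 - \<tau>) * L i ((x \<bullet> e i) / (1 - \<tau>)) + \<tau> * L0 N L 0)))"

definition Djunction :: "nat \<Rightarrow> (nat \<Rightarrow> real^2) \<Rightarrow> (nat \<Rightarrow> real \<Rightarrow> real) \<Rightarrow> real^2 \<Rightarrow> real^2 \<Rightarrow> ereal" where
  "Djunction N e L y x =
     Inf {E1 N e L \<tau>1 y + E2 N e L \<tau>2 x | \<tau>1 \<tau>2. 0 \<le> \<tau>1 \<and> \<tau>1 \<le> \<tau>2 \<and> \<tau>2 \<le> 1}"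

end

theory Submission
  imports Defs
begin

(* Lower bound.  An admissible path X of finite cost is continuous, stays in J, and
   stays on a single branch J_k on every connected time set avoiding the vertex 0;
   there Jensen's inequality for the convex L_k (via a supporting line) bounds the
   cost on (a, b) by (b - a) L_k ((X b - X a)_k / (b - a)).  If X never reaches 0
   this gives D_straight.  Otherwise, for the first and last times t1 <= t2 at 0,
   the outer legs give E1 t1 y and E2 t2 x, and the cost on [t1, t2] is at least
   (t2 - t1) L0 0, because the velocity vanishes a.e. at the vertex and integrates
   to zero over the excursions along each branch.
   Upper bound.  Explicit piecewise linear paths realise D_straight and each value
   E1 + E2 in the infimum defining D_junction. *)


lemma ray_char:
  fixes u :: "'a::real_inner"
  assumes "norm u = 1"
  shows "x \<in> {t *\<^sub>R u | t. t \<ge> 0} \<longleftrightarrow> x = (x \<bullet> u) *\<^sub>R u \<and> x \<bullet> u \<ge> 0"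
proof
  assume "x \<in> {t *\<^sub>R u | t. t \<ge> 0}"
  then obtain t where t: "t \<ge> 0" "x = t *\<^sub>R u" by auto
  have "u \<bullet> u = 1" using assms by (simp add: dot_square_norm)
  then have "x \<bullet> u = t" using t by simp
  then show "x = (x \<bullet> u) *\<^sub>R u \<and> x \<bullet> u \<ge> 0" using t by simp
next
  assume "x = (x \<bullet> u) *\<^sub>R u \<and> x \<bullet> u \<ge> 0"
  then show "x \<in> {t *\<^sub>R u | t. t \<ge> 0}" by blast
qed

lemma closed_ray:
  fixes u :: "'a::real_inner"
  assumes "norm u = 1"
  shows "closed {t *\<^sub>R u | t. t \<ge> 0}"
proof -
  have "{t *\<^sub>R u | t. t \<ge> 0} = {x. x = (x \<bullet> u) *\<^sub>R u \<and> x \<bullet> u \<ge> 0}"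
    using ray_char[OF assms] by blast
  also have "closed \<dots>"
    by (intro closed_Collect_conj closed_Collect_eq closed_Collect_le continuous_intros)
  finally show ?thesis .
qed

lemma rays_disjoint:
  fixes u v :: "'a::real_normed_vector"
  assumes "norm u = 1" "norm v = 1" "u \<noteq> v"
    and "x \<in> {t *\<^sub>R u | t. t \<ge> 0}" "x \<in> {t *\<^sub>R v | t. t \<ge> 0}"
  shows "x = 0"
proof (rule ccontr)
  assume nz: "x \<noteq> 0"
  obtain t where t: "t \<ge> 0" "x = t *\<^sub>R u" using assms(4) by auto
  obtain s where s: "s \<ge> 0" "x = s *\<^sub>R v" using assms(5) by auto
  have "norm x = t" using t assms(1) by simp
  moreover have "norm x = s" using s assms(2) by simp
  ultimately have "t = s" "t > 0" using nz t by auto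
  then have "u = v" using t s by (metis scaleR_cancel_left less_irrefl)
  then show False using assms by simp
qed

text \<open>An integrable function whose integrals over all half lines vanish is zero a.e.:
  the densities of its positive and negative parts agree on a generating family.\<close>
lemma ae_zero_of_tail_integrals:
  fixes f :: "real \<Rightarrow> real"
  assumes int: "integrable lborel f"
    and tails: "\<And>x. set_lebesgue_integral lborel {x<..} f = 0"
  shows "AE x in lborel. f x = 0"
proof -
  have [measurable]: "f \<in> borel_measurable lborel" using int by auto
  have density: "(\<integral>\<^sup>+ t. ennreal (h t) * indicator A t \<partial>lborel)
      = ennreal (\<integral> t. max 0 (h t) * indicator A t \<partial>lborel)"
    if A[measurable]: "A \<in> sets lborel" and h: "integrable lborel h" for A and h :: "real \<Rightarrow> real"
  proof -
    have [measurable]: "h \<in> borel_measurable lborel" using h by auto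
    have "(\<integral>\<^sup>+ t. ennreal (h t) * indicator A t \<partial>lborel)
        = (\<integral>\<^sup>+ t. ennreal (max 0 (h t) * indicator A t) \<partial>lborel)"
      by (intro nn_integral_cong) (auto simp: indicator_def max_def ennreal_neg)
    also have "\<dots> = ennreal (\<integral> t. max 0 (h t) * indicator A t \<partial>lborel)"
      using integrable_mult_indicator[OF A integrable_max[OF integrable_zero h]]
      by (intro nn_integral_eq_integral) (auto simp: mult.commute)
    finally show ?thesis .
  qed
  have int_part: "integrable lborel (\<lambda>t. max 0 (h t) * indicator A t)"
    if "A \<in> sets lborel" "integrable lborel h" for A and h :: "real \<Rightarrow> real"
    using integrable_mult_indicator[OF that(1) integrable_max[OF integrable_zero that(2)]]
    by (simp add: mult.commute)
  let ?M = "density lborel (\<lambda>x. ennreal (f x))"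
  let ?N = "density lborel (\<lambda>x. ennreal (- f x))"
  have "?M = ?N"
  proof (rule measure_eqI_lessThan)
    show "sets ?M = sets borel" "sets ?N = sets borel" by auto
    fix x :: real
    show "emeasure ?M {x<..} < \<infinity>"
      using int by (simp add: emeasure_density density)
    have "0 = (\<integral> t. f t * indicator {x<..} t \<partial>lborel)"
      using tails[of x] by (simp add: set_lebesgue_integral_def mult.commute)
    also have "\<dots> = (\<integral> t. max 0 (f t) * indicator {x<..} t - max 0 (- f t) * indicator {x<..} t \<partial>lborel)"
      by (intro Bochner_Integration.integral_cong) (auto simp: max_def)
    also have "\<dots> = (\<integral> t. max 0 (f t) * indicator {x<..} t \<partial>lborel)
        - (\<integral> t. max 0 (- f t) * indicator {x<..} t \<partial>lborel)"
      using int by (intro Bochner_Integration.integral_diff int_part) auto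
    finally show "emeasure ?M {x<..} = emeasure ?N {x<..}"
      using int by (simp add: emeasure_density density)
  qed
  then have "AE x in lborel. ennreal (f x) = ennreal (- f x)"
    by (intro sigma_finite_measure.density_unique sigma_finite_lborel) auto
  then show ?thesis
    by eventually_elim (metis ennreal_neg le_cases neg_0_le_iff_le neg_le_0_iff_le
        order_antisym ennreal_eq_0_iff)
qed

lemma disjoint_sequence_of_countable:
  fixes S :: "'a set set"
  assumes cnt: "countable S" and disj: "pairwise disjnt S"
  obtains A :: "nat \<Rightarrow> 'a set"
  where "disjoint_family A" "(\<Union>n. A n) = \<Union>S" "\<And>n. A n = {} \<or> A n \<in> S"
proof -
  define A where "A n = (if n \<in> to_nat_on S ` S then from_nat_into S n else {})" for n
  have "disjoint_family A"
  proof (unfold disjoint_family_on_def, intro ballI impI)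
    fix n m :: nat assume "n \<noteq> m"
    show "A n \<inter> A m = {}"
    proof (cases "n \<in> to_nat_on S ` S \<and> m \<in> to_nat_on S ` S")
      case True
      then obtain C D where "C \<in> S" "D \<in> S" "n = to_nat_on S C" "m = to_nat_on S D" by blast
      moreover from this have "C \<noteq> D" using \<open>n \<noteq> m\<close> by blast
      ultimately show ?thesis using disj cnt by (auto simp: A_def pairwise_def disjnt_def)
    qed (auto simp: A_def)
  qed
  moreover have "(\<Union>n. A n) = \<Union>S"
  proof
    show "(\<Union>n. A n) \<subseteq> \<Union>S" using cnt by (auto simp: A_def)
    show "\<Union>S \<subseteq> (\<Union>n. A n)"
    proof
      fix z assume "z \<in> \<Union>S"
      then obtain C where "C \<in> S" "z \<in> C" by blast
      then have "A (to_nat_on S C) = C" using cnt by (auto simp: A_def)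
      then show "z \<in> (\<Union>n. A n)" using \<open>z \<in> C\<close> by blast
    qed
  qed
  moreover have "A n = {} \<or> A n \<in> S" for n using cnt by (auto simp: A_def)
  ultimately show ?thesis using that by blast
qed

lemma integral_open_components:
  fixes f :: "real \<Rightarrow> 'a::{banach, second_countable_topology}"
  assumes U: "open U" and int: "set_integrable lborel U f"
    and zero: "\<And>C. C \<in> components U \<Longrightarrow> set_lebesgue_integral lborel C f = 0"
  shows "set_lebesgue_integral lborel U f = 0"
proof -
  have "countable (components U)"
    using open_components[OF U] pairwise_disjoint_components[of U]
    by (intro countable_disjoint_open_subsets) (auto simp: pairwise_def disjnt_def)
  moreover have "pairwise disjnt (components U)"
    using pairwise_disjoint_components[of U] unfolding pairwise_def disjnt_def by blast
  ultimately obtain A :: "nat \<Rightarrow> real set" where A: "disjoint_family A" "(\<Union>n. A n) = U"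
    "\<And>n. A n = {} \<or> A n \<in> components U"
    by (rule disjoint_sequence_of_countable) auto
  have meas: "A n \<in> sets lborel" for n
    using A(3)[of n] open_components[OF U] by auto
  have "set_lebesgue_integral lborel (\<Union>n. A n) f = (\<Sum>n. set_lebesgue_integral lborel (A n) f)"
    using A int by (intro lebesgue_integral_countable_add meas) (auto simp: disjoint_family_on_def)
  also have "\<dots> = (\<Sum>n. 0)"
  proof (intro suminf_cong)
    show "set_lebesgue_integral lborel (A n) f = 0" for n
      using A(3)[of n] zero by (auto simp: set_lebesgue_integral_def)
  qed
  finally show ?thesis using A(2) by simp
qed

lemma component_interval:
  fixes U C :: "real set"
  assumes U: "open U" "bounded U" and C: "C \<in> components U"
  shows "\<exists>a b. C = {a<..<b} \<and> a < b \<and> a \<in> frontier U \<and> b \<in> frontier U"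
proof -
  have ne: "C \<noteq> {}" using C by (rule in_components_nonempty)
  have oC: "open C" using open_components[OF U(1) C] .
  have sub: "C \<subseteq> U" using C by (rule in_components_subset)
  have bdd: "bdd_below C" "bdd_above C"
    using bounded_subset[OF U(2) sub] by (auto intro: bounded_imp_bdd_below bounded_imp_bdd_above)
  define a where "a = Inf C"
  define b where "b = Sup C"
  have aC: "a \<notin> C"
  proof
    assume "a \<in> C"
    then obtain r where r: "r > 0" "ball a r \<subseteq> C" using oC by (meson openE)
    then have "a - r/2 \<in> C" by (auto simp: dist_real_def)
    then have "a \<le> a - r/2" unfolding a_def using bdd by (intro cInf_lower) auto
    then show False using r by simp
  qed
  have bC: "b \<notin> C"
  proof
    assume "b \<in> C"
    then obtain r where r: "r > 0" "ball b r \<subseteq> C" using oC by (meson openE)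
    then have "b + r/2 \<in> C" by (auto simp: dist_real_def)
    then have "b + r/2 \<le> b" unfolding b_def using bdd by (intro cSup_upper) auto
    then show False using r by simp
  qed
  have "C \<subseteq> {a<..<b}"
  proof
    fix c assume c: "c \<in> C"
    have "a \<le> c" "c \<le> b" unfolding a_def b_def using c bdd by (auto intro: cInf_lower cSup_upper)
    then show "c \<in> {a<..<b}" using c aC bC by (cases "c = a \<or> c = b") auto
  qed
  moreover have "{a<..<b} \<subseteq> C"
  proof
    fix z assume z: "z \<in> {a<..<b}"
    obtain c1 where c1: "c1 \<in> C" "c1 < z" using z ne bdd(1) cInf_less_iff[of C z] unfolding a_def by auto
    obtain c2 where c2: "c2 \<in> C" "z < c2" using z ne bdd(2) less_cSup_iff[of C z] unfolding b_def by auto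
    have "is_interval C" using in_components_connected[OF C] is_interval_connected_1 by blast
    then show "z \<in> C" using c1 c2 unfolding is_interval_1 by (meson less_le)
  qed
  ultimately have Ceq: "C = {a<..<b}" by blast
  have ab: "a < b" using ne Ceq by (metis greaterThanLessThan_empty_iff not_less)
  obtain z where "C = connected_component_set U z" using C components_iff by blast
  then have fr: "frontier C \<subseteq> frontier U" using frontier_of_connected_component_subset by metis
  have "a \<in> closure C" "b \<in> closure C"
    unfolding a_def b_def using ne bdd by (auto intro: closure_contains_Inf closure_contains_Sup)
  then have "a \<in> frontier U" "b \<in> frontier U"
    using aC bC oC fr by (auto simp: frontier_def interior_open)
  then show ?thesis using Ceq ab by blast
qed

lemma ae_witness_in_interval:
  fixes u v :: real
  assumes ae: "AE s in lborel. P s" and uv: "u < v"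
  shows "\<exists>s\<in>{u<..<v}. P s"
proof (rule ccontr)
  assume none: "\<not> ?thesis"
  have "AE s in lborel. s \<notin> {u<..<v}" using ae by eventually_elim (use none in blast)
  then have "{u<..<v} \<in> null_sets lborel" using AE_iff_null_sets[of "{u<..<v}" lborel] by simp
  then show False using uv by (auto simp: null_sets_def)
qed

lemma set_integral_indicator_vector:
  fixes S A :: "real set" and v :: "'a::{banach, second_countable_topology}"
  assumes "S \<in> sets borel" "A \<in> sets borel" "emeasure lborel (S \<inter> A) < \<infinity>"
  shows "set_integrable lborel S (\<lambda>\<tau>. indicator A \<tau> *\<^sub>R v)"
    and "set_lebesgue_integral lborel S (\<lambda>\<tau>. indicator A \<tau> *\<^sub>R v) = measure lborel (S \<inter> A) *\<^sub>R v"
proof -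
  have eq: "(\<lambda>\<tau>. indicator S \<tau> *\<^sub>R (indicator A \<tau> *\<^sub>R v)) = (\<lambda>\<tau>. indicator (S \<inter> A) \<tau> *\<^sub>R v)"
    by (rule ext) (simp add: indicator_inter_arith)
  have "integrable lborel (indicator (S \<inter> A) :: real \<Rightarrow> real)"
    using assms by (intro integrable_real_indicator) auto
  then show "set_integrable lborel S (\<lambda>\<tau>. indicator A \<tau> *\<^sub>R v)"
    and "set_lebesgue_integral lborel S (\<lambda>\<tau>. indicator A \<tau> *\<^sub>R v) = measure lborel (S \<inter> A) *\<^sub>R v"
    unfolding set_integrable_def set_lebesgue_integral_def eq by simp_all
qed

lemma set_integrable_imp_measurable:
  "set_integrable M A f \<Longrightarrow> set_borel_measurable M A f"
  unfolding set_integrable_def set_borel_measurable_def by (rule borel_measurable_integrable)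

lemma set_integral_Icc_Ioo:
  fixes F :: "real \<Rightarrow> real"
  assumes F: "set_integrable lborel {l..r} F"
  shows "set_lebesgue_integral lborel {l..r} F = set_lebesgue_integral lborel {l<..<r} F"
proof (rule set_integral_cong_set)
  show "set_borel_measurable lborel {l<..<r} F" "set_borel_measurable lborel {l..r} F"
    using F by (auto intro!: set_integrable_imp_measurable set_integrable_subset[OF F])
  show "AE \<tau> in lborel. (\<tau> \<in> {l<..<r}) = (\<tau> \<in> {l..r})"
    using AE_lborel_singleton[of l] AE_lborel_singleton[of r] by eventually_elim auto
qed

lemma set_integral_split_three:
  fixes F :: "real \<Rightarrow> real"
  assumes F: "set_integrable lborel {l..r} F" and ab: "l \<le> a" "a \<le> b" "b \<le> r"
  shows "set_lebesgue_integral lborel {l..r} F = set_lebesgue_integral lborel {l<..<a} F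
    + set_lebesgue_integral lborel {a..b} F + set_lebesgue_integral lborel {b<..<r} F"
proof -
  have i: "set_integrable lborel S F" if "S \<in> sets borel" "S \<subseteq> {l..r}" for S
    using set_integrable_subset[OF F] that by auto
  have "set_lebesgue_integral lborel {l..r} F = set_lebesgue_integral lborel ({l<..<a} \<union> {a..b} \<union> {b<..<r}) F"
  proof (rule set_integral_cong_set)
    show "set_borel_measurable lborel ({l<..<a} \<union> {a..b} \<union> {b<..<r}) F"
      "set_borel_measurable lborel {l..r} F"
      using ab by (auto intro!: set_integrable_imp_measurable i)
    show "AE \<tau> in lborel. (\<tau> \<in> {l<..<a} \<union> {a..b} \<union> {b<..<r}) = (\<tau> \<in> {l..r})"
      using AE_lborel_singleton[of l] AE_lborel_singleton[of r] by eventually_elim (use ab in auto)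
  qed
  also have "\<dots> = set_lebesgue_integral lborel ({l<..<a} \<union> {a..b}) F + set_lebesgue_integral lborel {b<..<r} F"
    using ab by (intro set_integral_Un set_integrable_Un i) auto
  also have "set_lebesgue_integral lborel ({l<..<a} \<union> {a..b}) F
      = set_lebesgue_integral lborel {l<..<a} F + set_lebesgue_integral lborel {a..b} F"
    using ab by (intro set_integral_Un i) auto
  finally show ?thesis .
qed

lemma measure_Icc_before:
  fixes t a :: real
  assumes "0 \<le> t" "0 \<le> a"
  shows "measure lborel ({0..t} \<inter> {..<a}) = min t a"
proof (cases "t < a")
  case True
  then have "{0..t} \<inter> {..<a} = {0..t}" by auto
  then show ?thesis using True assms by simp
next
  case False
  then have "{0..t} \<inter> {..<a} = {0..<a}" by auto
  then show ?thesis using False assms by simp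
qed

lemma measure_Icc_after:
  fixes t b :: real
  assumes "0 \<le> t" "0 \<le> b"
  shows "measure lborel ({0..t} \<inter> {b<..}) = max 0 (t - b)"
proof (cases "t \<le> b")
  case True
  then have "{0..t} \<inter> {b<..} = {}" by auto
  then show ?thesis using True by simp
next
  case False
  then have "{0..t} \<inter> {b<..} = {b<..t}" using assms by auto
  then show ?thesis using False assms by simp
qed

lemma finite_measure_bounded:
  fixes A :: "real set"
  assumes "A \<in> sets borel" "A \<subseteq> {a..b}"
  shows "emeasure lborel A < \<infinity>"
proof -
  have "emeasure lborel A \<le> emeasure lborel {a..b}" using assms by (intro emeasure_mono) auto
  also have "\<dots> < \<infinity>" by (cases "a \<le> b") auto
  finally show ?thesis .
qed

text \<open>The route through the vertex used for the upper bound: from y straight to the origin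
  during [0, a], rest there during [a, b], then straight to x during [b, 1].\<close>
definition route_velocity :: "real \<Rightarrow> real \<Rightarrow> 'a::euclidean_space \<Rightarrow> 'a \<Rightarrow> real \<Rightarrow> 'a" where
  "route_velocity a b y x \<tau> =
     indicator {..<a} \<tau> *\<^sub>R ((- 1 / a) *\<^sub>R y) + indicator {b<..} \<tau> *\<^sub>R ((1 / (1 - b)) *\<^sub>R x)"

definition route_position :: "real \<Rightarrow> real \<Rightarrow> 'a::euclidean_space \<Rightarrow> 'a \<Rightarrow> real \<Rightarrow> 'a" where
  "route_position a b y x \<tau> =
     y + min \<tau> a *\<^sub>R ((- 1 / a) *\<^sub>R y) + max 0 (\<tau> - b) *\<^sub>R ((1 / (1 - b)) *\<^sub>R x)"

lemma route_primitive:
  assumes ab: "0 \<le> a" "a \<le> b" "b \<le> 1" and ya: "a = 0 \<longleftrightarrow> y = 0" and xb: "b = 1 \<longleftrightarrow> x = 0"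
  shows "route_position a b y x 0 = y" "route_position a b y x 1 = x"
    and "set_integrable lborel {0..1} (route_velocity a b y x)"
    and "\<forall>t\<in>{0..1}. route_position a b y x t
      = route_position a b y x 0 + set_lebesgue_integral lborel {0..t} (route_velocity a b y x)"
proof -
  have integral: "set_integrable lborel S (route_velocity a b y x)
      \<and> set_lebesgue_integral lborel S (route_velocity a b y x)
        = measure lborel (S \<inter> {..<a}) *\<^sub>R ((- 1 / a) *\<^sub>R y) + measure lborel (S \<inter> {b<..}) *\<^sub>R ((1 / (1 - b)) *\<^sub>R x)"
    if S: "S \<in> sets borel" "S \<subseteq> {0..1}" for S
  proof -
    have fin: "emeasure lborel (S \<inter> A) < \<infinity>" if "A \<in> sets borel" for A
      using S that by (intro finite_measure_bounded[of _ 0 1]) auto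
    note ind = set_integral_indicator_vector[OF S(1) _ fin]
    have i1: "set_integrable lborel S (\<lambda>\<tau>. indicator {..<a} \<tau> *\<^sub>R ((- 1 / a) *\<^sub>R y))"
      by (rule ind(1)) auto
    have i2: "set_integrable lborel S (\<lambda>\<tau>. indicator {b<..} \<tau> *\<^sub>R ((1 / (1 - b)) *\<^sub>R x))"
      by (rule ind(1)) auto
    show ?thesis unfolding route_velocity_def
      using set_integral_add[OF i1 i2] ind(2)[of "{..<a}" "(- 1 / a) *\<^sub>R y"]
        ind(2)[of "{b<..}" "(1 / (1 - b)) *\<^sub>R x"] by simp
  qed
  have "a *\<^sub>R ((- 1 / a) *\<^sub>R y) = - y" using ya by (cases "y = 0") auto
  moreover have "(1 - b) *\<^sub>R ((1 / (1 - b)) *\<^sub>R x) = x" using xb by (cases "x = 0") auto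
  ultimately show "route_position a b y x 0 = y" "route_position a b y x 1 = x"
    unfolding route_position_def using ab by simp_all
  show "set_integrable lborel {0..1} (route_velocity a b y x)" using integral by auto
  show "\<forall>t\<in>{0..1}. route_position a b y x t
      = route_position a b y x 0 + set_lebesgue_integral lborel {0..t} (route_velocity a b y x)"
    using integral ab by (auto simp: route_position_def measure_Icc_before measure_Icc_after)
qed

text \<open>The standing assumptions (A1): N distinct unit directions e_i and Lagrangians L_i
  whose second derivative is bounded below by \<gamma> > 0.\<close>
locale junction_setting =
  fixes N :: nat and e :: "nat \<Rightarrow> real^2" and L :: "nat \<Rightarrow> real \<Rightarrow> real" and \<gamma> :: real
  assumes N1: "N \<ge> 1" and inj: "inj_on e {1..N}" and unit: "\<forall>i\<in>{1..N}. norm (e i) = 1"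
    and gpos: "\<gamma> > 0"
    and Lreg: "\<forall>i\<in>{1..N}. \<exists>L1 L2. continuous_on UNIV L2 \<and>
           (\<forall>p. (L i has_real_derivative L1 p) (at p) \<and>
                (L1 has_real_derivative L2 p) (at p) \<and> L2 p \<ge> \<gamma>)"
begin

lemma unit_dir: "i \<in> {1..N} \<Longrightarrow> norm (e i) = 1"
  using unit by auto

lemma ray_mem: "i \<in> {1..N} \<Longrightarrow> z \<in> ray e i \<longleftrightarrow> z = (z \<bullet> e i) *\<^sub>R e i \<and> z \<bullet> e i \<ge> 0"
  unfolding ray_def using ray_char[OF unit_dir] by blast

lemma ray_closed: "i \<in> {1..N} \<Longrightarrow> closed (ray e i)"
  unfolding ray_def using closed_ray[OF unit_dir] by blast

lemma zero_ray [simp]: "0 \<in> ray e i"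
  unfolding ray_def by force

lemma junction_closed: "closed (junction N e)"
  unfolding junction_def using ray_closed by (intro closed_UN) auto

lemma junction_ray: "z \<in> junction N e \<Longrightarrow> \<exists>i\<in>{1..N}. z \<in> ray e i"
  unfolding junction_def by auto

lemma ray_junction: "i \<in> {1..N} \<Longrightarrow> z \<in> ray e i \<Longrightarrow> z \<in> junction N e"
  unfolding junction_def by auto

lemma rays_meet:
  "i \<in> {1..N} \<Longrightarrow> k \<in> {1..N} \<Longrightarrow> i \<noteq> k \<Longrightarrow> z \<in> ray e i \<Longrightarrow> z \<in> ray e k \<Longrightarrow> z = 0"
  using rays_disjoint[OF unit_dir unit_dir, of i k z] inj unfolding ray_def inj_on_def by blast

lemma branch_idx_eq:
  assumes "i \<in> {1..N}" "z \<in> ray e i" "z \<noteq> 0"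
  shows "branch_idx N e z = i"
proof -
  have "branch_idx N e z \<in> {1..N} \<and> z \<in> ray e (branch_idx N e z)"
    unfolding branch_idx_def by (rule someI[of _ i]) (use assms in auto)
  then show ?thesis using rays_meet assms by blast
qed

lemma Lag_ray: "i \<in> {1..N} \<Longrightarrow> z \<in> ray e i \<Longrightarrow> z \<noteq> 0 \<Longrightarrow> Lag N e L z P = L i (P \<bullet> e i)"
  unfolding Lag_def using branch_idx_eq by simp

lemma Lag_zero [simp]: "Lag N e L 0 P = L0 N L (norm P)"
  unfolding Lag_def by simp

lemma L0_le: "i \<in> {1..N} \<Longrightarrow> L0 N L p \<le> L i p"
  unfolding L0_def by (intro Min_le) auto

text \<open>Each L_i is convex, so it lies above a supporting line at every point.\<close>
lemma supporting_line:
  assumes "i \<in> {1..N}"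
  obtains s where "\<And>p. L i q + s * (p - q) \<le> L i p"
proof -
  obtain L1 L2 where h: "\<forall>p. (L i has_real_derivative L1 p) (at p) \<and>
      (L1 has_real_derivative L2 p) (at p) \<and> L2 p \<ge> \<gamma>"
    using Lreg assms by blast
  have "0 \<le> L2 p" for p using h gpos by (meson less_imp_le order_trans)
  then have "L1 q * (p - q) \<le> L i p - L i q" for p
    using h by (intro f''_imp_f'[of UNIV "L i" L1 L2]) auto
  then show ?thesis using that[of "L1 q"] by (simp add: algebra_simps)
qed

lemma Dstraight_ray:
  assumes k: "k \<in> {1..N}" "y \<in> ray e k" "x \<in> ray e k" and nz: "\<not> (y = 0 \<and> x = 0)"
  shows "Dstraight N e L y x = ereal (L k (x \<bullet> e k - y \<bullet> e k))"
proof -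
  define i where "i = (SOME i. i \<in> {1..N} \<and> y \<in> ray e i \<and> x \<in> ray e i)"
  have i: "i \<in> {1..N}" "y \<in> ray e i" "x \<in> ray e i"
    unfolding i_def by (rule someI2[of _ k]; use k in blast)+
  have "i = k" using rays_meet[OF i(1) k(1)] i k nz by blast
  then show ?thesis using k nz unfolding Dstraight_def i_def Let_def by auto
qed

lemma moving_on_ray:
  assumes k: "k \<in> {1..N}" and r: "r > 0"
  shows "r *\<^sub>R e k \<in> junction N e" "p *\<^sub>R e k \<in> adm_dir N e (r *\<^sub>R e k)"
    and "Lag N e L (r *\<^sub>R e k) (p *\<^sub>R e k) = L k p"
proof -
  have on_ray: "r *\<^sub>R e k \<in> ray e k" using r unfolding ray_def by auto
  have ek: "e k \<bullet> e k = 1" using unit_dir[OF k] by (simp add: dot_square_norm)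
  then have nz: "r *\<^sub>R e k \<noteq> 0" using r by auto
  show "r *\<^sub>R e k \<in> junction N e" by (rule ray_junction[OF k on_ray])
  show "p *\<^sub>R e k \<in> adm_dir N e (r *\<^sub>R e k)"
    using nz branch_idx_eq[OF k on_ray nz] by (auto simp: adm_dir_def)
  show "Lag N e L (r *\<^sub>R e k) (p *\<^sub>R e k) = L k p"
    using Lag_ray[OF k on_ray nz] ek by simp
qed

end


locale admissible_path = junction_setting +
  fixes y x :: "real^2" and X g :: "real \<Rightarrow> real^2"
  assumes adm: "admissible N e y x X g"
begin

abbreviation running_cost :: "real \<Rightarrow> real" where
  "running_cost \<tau> \<equiv> Lag N e L (X \<tau>) (g \<tau>)"

lemma velocity_integrable: "set_integrable lborel {0..1} g"
  using adm unfolding admissible_def by blast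

lemma path_start: "X 0 = y"
  using adm unfolding admissible_def by blast

lemma path_end: "X 1 = x"
  using adm unfolding admissible_def by blast

lemma position: "t \<in> {0..1} \<Longrightarrow> X t = y + set_lebesgue_integral lborel {0..t} g"
  using adm unfolding admissible_def by auto

lemma velocity_integrable_on: "S \<in> sets borel \<Longrightarrow> S \<subseteq> {0..1} \<Longrightarrow> set_integrable lborel S g"
  by (rule set_integrable_subset[OF velocity_integrable]) auto

lemma path_continuous: "continuous_on {0..1} X"
proof -
  have "g integrable_on {0..1}" using set_borel_integral_eq_integral(1)[OF velocity_integrable] .
  then have "continuous_on {0..1} (\<lambda>t. y + integral {0..t} g)"
    by (intro continuous_intros indefinite_integral_continuous_1)
  moreover have "y + integral {0..t} g = X t" if t: "t \<in> {0..1}" for t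
  proof -
    have "set_integrable lborel {0..t} g" using t by (intro velocity_integrable_on) auto
    then show ?thesis using position[OF t] set_borel_integral_eq_integral(2) by metis
  qed
  ultimately show ?thesis using continuous_on_eq by blast
qed

text \<open>The path lies in J at all times, not only almost always, since J is closed.\<close>
lemma path_in_junction:
  assumes t: "t \<in> {0..1}"
  shows "X t \<in> junction N e"
proof (rule ccontr)
  assume "X t \<notin> junction N e"
  moreover have "open (- junction N e)" using junction_closed by auto
  ultimately obtain \<epsilon> where \<epsilon>: "\<epsilon> > 0" "ball (X t) \<epsilon> \<subseteq> - junction N e" by (meson ComplI openE)
  obtain d where d: "d > 0" "\<forall>s\<in>{0..1}. dist s t < d \<longrightarrow> dist (X s) (X t) < \<epsilon>"
    using path_continuous t \<epsilon>(1) unfolding continuous_on_iff by blast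
  define u where "u = max 0 (t - d)"
  define v where "v = min 1 (t + d)"
  have uv: "u < v" "{u<..<v} \<subseteq> {0..1}" using t d(1) by (auto simp: u_def v_def)
  have "AE \<tau> in lborel. \<tau> \<in> {0..1} \<longrightarrow> X \<tau> \<in> junction N e \<and> g \<tau> \<in> adm_dir N e (X \<tau>)"
    using adm unfolding admissible_def by blast
  then have "AE \<tau> in lborel. \<tau> \<in> {0..1} \<longrightarrow> X \<tau> \<in> junction N e"
    by eventually_elim blast
  then obtain s where s: "s \<in> {u<..<v}" "s \<in> {0..1} \<longrightarrow> X s \<in> junction N e"
    using ae_witness_in_interval[OF _ uv(1)] by blast
  then have "s \<in> {0..1}" "dist s t < d" using uv by (auto simp: u_def v_def dist_real_def)
  then have "X s \<in> ball (X t) \<epsilon>" "X s \<in> junction N e" using d s(2) by (auto simp: dist_commute)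
  then show False using \<epsilon>(2) by auto
qed

lemma displacement:
  assumes "0 \<le> a" "a \<le> b" "b \<le> 1"
  shows "set_lebesgue_integral lborel {a<..<b} g = X b - X a"
proof -
  have ib: "set_integrable lborel {a<..b} g" "set_integrable lborel {0..a} g"
    using assms by (auto intro!: velocity_integrable_on)
  have "{0..b} = {0..a} \<union> {a<..b}" "{0..a} \<inter> {a<..b} = {}" using assms by auto
  then have "set_lebesgue_integral lborel {0..b} g
      = set_lebesgue_integral lborel {0..a} g + set_lebesgue_integral lborel {a<..b} g"
    using set_integral_Un[of "{0..a}" "{a<..b}" lborel g] ib by simp
  moreover have "X b = y + set_lebesgue_integral lborel {0..b} g"
    "X a = y + set_lebesgue_integral lborel {0..a} g"
    using position assms by auto
  moreover have "set_lebesgue_integral lborel {a<..b} g = set_lebesgue_integral lborel {a<..<b} g"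
  proof (rule set_integral_cong_set)
    show "set_borel_measurable lborel {a<..<b} g" "set_borel_measurable lborel {a<..b} g"
      using assms by (auto intro!: set_integrable_imp_measurable velocity_integrable_on)
    show "AE x in lborel. (x \<in> {a<..<b}) = (x \<in> {a<..b})"
      using AE_lborel_singleton[of b] by eventually_elim auto
  qed
  ultimately show ?thesis by simp
qed

text \<open>On a connected set of times avoiding the vertex the path stays on one branch: its
  connected image is covered by the closed sets J_k and the union of the other branches,
  which meet only at the vertex.\<close>
lemma single_ray:
  assumes I: "I \<subseteq> {0..1}" "connected I" and nz: "\<forall>t\<in>I. X t \<noteq> 0"
  shows "\<exists>k\<in>{1..N}. \<forall>t\<in>I. X t \<in> ray e k"
proof (cases "I = {}")
  case True then show ?thesis using N1 by auto
next
  case False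
  then obtain t0 where t0: "t0 \<in> I" by blast
  then obtain k where k: "k \<in> {1..N}" "X t0 \<in> ray e k" using path_in_junction I junction_ray by blast
  let ?B = "\<Union>m\<in>{1..N}-{k}. ray e m"
  have "connected (X ` I)"
    using I path_continuous by (intro connected_continuous_image) (auto intro: continuous_on_subset)
  moreover have "ray e k \<inter> ?B \<inter> X ` I = {}"
    using rays_meet[OF _ k(1)] nz by fastforce
  moreover have "X ` I \<subseteq> ray e k \<union> ?B"
  proof
    fix z assume "z \<in> X ` I"
    then obtain m where "m \<in> {1..N}" "z \<in> ray e m" using path_in_junction I junction_ray by blast
    then show "z \<in> ray e k \<union> ?B" by (cases "m = k") auto
  qed
  moreover have "closed (ray e k)" "closed ?B" using k(1) ray_closed by auto
  ultimately have "ray e k \<inter> X ` I = {} \<or> ?B \<inter> X ` I = {}" by (rule connected_closedD)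
  then have "X ` I \<subseteq> ray e k" using \<open>X ` I \<subseteq> ray e k \<union> ?B\<close> t0 k(2) by blast
  then show ?thesis using k(1) by blast
qed

text \<open>If X is at the vertex on the frontier of an open set U of times, the velocity
  integrates to zero over U: each component of U is an excursion from 0 to 0.\<close>
lemma integral_zero_if_frontier_at_vertex:
  assumes U: "open U" "U \<subseteq> {0..1}" and frontier: "\<And>\<tau>. \<tau> \<in> frontier U \<Longrightarrow> X \<tau> = 0"
  shows "set_lebesgue_integral lborel U g = 0"
proof (rule integral_open_components[OF U(1)])
  show "set_integrable lborel U g" using U by (intro velocity_integrable_on borel_open) auto
  have "frontier U \<subseteq> {0..1}"
    using closure_minimal[OF U(2)] by (auto simp: frontier_def)
  fix C assume "C \<in> components U"
  then obtain a b where ab: "C = {a<..<b}" "a < b" "a \<in> frontier U" "b \<in> frontier U"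
    using component_interval[OF U(1) bounded_subset[OF bounded_closed_interval U(2)]] by blast
  moreover have "a \<in> {0..1}" "b \<in> {0..1}" using ab \<open>frontier U \<subseteq> {0..1}\<close> by auto
  ultimately show "set_lebesgue_integral lborel C g = 0"
    using displacement[of a b] frontier by simp
qed

text \<open>Between two visits of the vertex, the velocity integrates to zero over the
  times spent at the vertex (the complement consists of excursions).\<close>
lemma integral_zero_on_zero_set:
  assumes st: "0 \<le> s" "s \<le> t" "t \<le> 1" "X s = 0" "X t = 0"
  shows "set_lebesgue_integral lborel {\<tau>\<in>{s<..<t}. X \<tau> = 0} g = 0"
proof -
  let ?U = "{\<tau>\<in>{s<..<t}. X \<tau> \<noteq> 0}"
  let ?Z = "{\<tau>\<in>{s<..<t}. X \<tau> = 0}"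
  have "continuous_on {s<..<t} X" using path_continuous by (rule continuous_on_subset) (use st in auto)
  then have "open ({s<..<t} \<inter> X -` (- {0}))" by (rule continuous_open_preimage) auto
  moreover have "?U = {s<..<t} \<inter> X -` (- {0})" by auto
  ultimately have oU: "open ?U" by simp
  have "X \<tau> = 0" if "\<tau> \<in> frontier ?U" for \<tau>
  proof -
    have "closure ?U \<subseteq> {s..t}" by (rule closure_minimal) auto
    then show ?thesis using that st oU by (cases "\<tau> = s \<or> \<tau> = t") (auto simp: frontier_def interior_open)
  qed
  then have U0: "set_lebesgue_integral lborel ?U g = 0"
    using oU st by (intro integral_zero_if_frontier_at_vertex) auto
  have mZ: "?Z \<in> sets borel"
  proof -
    have "?Z = {s<..<t} - ?U" by auto
    then show ?thesis using oU by (simp only:) (intro sets.Diff borel_open; simp)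
  qed
  have "set_lebesgue_integral lborel {s<..<t} g
      = set_lebesgue_integral lborel ?Z g + set_lebesgue_integral lborel ?U g"
  proof -
    have "?Z \<union> ?U = {s<..<t}" "?Z \<inter> ?U = {}" by auto
    moreover have "set_integrable lborel ?Z g" "set_integrable lborel ?U g"
      using mZ oU st by (auto intro!: velocity_integrable_on)
    ultimately show ?thesis using set_integral_Un[of ?Z ?U lborel g] by simp
  qed
  moreover have "set_lebesgue_integral lborel {s<..<t} g = 0" using displacement st by simp
  ultimately show ?thesis using U0 by simp
qed

lemma vertex_times_closed: "closed {\<tau>\<in>{0..1}. X \<tau> = 0}"
proof -
  have "closed ({0..1} \<inter> X -` {0})" by (rule continuous_closed_preimage[OF path_continuous]) auto
  moreover have "{\<tau>\<in>{0..1}. X \<tau> = 0} = {0..1} \<inter> X -` {0}" by blast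
  ultimately show ?thesis by simp
qed

text \<open>The velocity integrates to zero over every tail of the set of times at the vertex:
  up to end points, such a tail is the set of times at the vertex between two such times.\<close>
lemma vertex_times_tail_integral:
  "set_lebesgue_integral lborel ({x0<..} \<inter> {\<tau>\<in>{0..1}. X \<tau> = 0}) g = 0"
proof -
  let ?Z = "{\<tau>\<in>{0..1}. X \<tau> = 0}"
  have cZ: "closed ?Z" by (rule vertex_times_closed)
  then have mZ: "?Z \<in> sets borel" by (rule borel_closed)
  show ?thesis
  proof (cases "{x0<..} \<inter> ?Z = {}")
    case True then show ?thesis by (simp add: set_lebesgue_integral_def)
  next
    case False
    let ?W = "{x0<..} \<inter> ?Z"
    have bW: "bdd_below ?W" "bdd_above ?W" by (auto intro: bdd_belowI[of _ 0] bdd_aboveI[of _ 1])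
    define s where "s = Inf ?W"
    define t where "t = Sup ?W"
    have "closure ?W \<subseteq> ?Z" by (rule closure_minimal[OF _ cZ]) blast
    moreover have "s \<in> closure ?W" "t \<in> closure ?W"
      unfolding s_def t_def using False bW by (auto intro: closure_contains_Inf closure_contains_Sup)
    ultimately have st: "0 \<le> s" "t \<le> 1" "X s = 0" "X t = 0" by auto
    have xs: "x0 \<le> s" unfolding s_def by (rule cInf_greatest[OF False]) simp
    have between: "s \<le> \<tau> \<and> \<tau> \<le> t" if "\<tau> \<in> ?W" for \<tau>
      unfolding s_def t_def using cInf_lower[OF that bW(1)] cSup_upper[OF that bW(2)] by simp
    then have "s \<le> t" using False by (meson ex_in_conv order_trans)
    let ?Zst = "{\<tau>\<in>{s<..<t}. X \<tau> = 0}"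
    have mZst: "?Zst \<in> sets borel"
    proof -
      have "?Zst = {s<..<t} \<inter> ?Z" using st by auto
      then show ?thesis using mZ by simp
    qed
    have "set_lebesgue_integral lborel ?W g = set_lebesgue_integral lborel ?Zst g"
    proof (rule set_integral_cong_set)
      show "set_borel_measurable lborel ?Zst g" "set_borel_measurable lborel ?W g"
        using mZ mZst st by (auto intro!: set_integrable_imp_measurable velocity_integrable_on)
      show "AE \<tau> in lborel. (\<tau> \<in> ?Zst) = (\<tau> \<in> ?W)"
        using AE_lborel_singleton[of s] AE_lborel_singleton[of t]
        by eventually_elim (use xs st between in fastforce)
    qed
    also have "\<dots> = 0" by (rule integral_zero_on_zero_set[OF st(1) \<open>s \<le> t\<close> st(2-4)])
    finally show ?thesis .
  qed
qed

text \<open>The velocity vanishes almost everywhere on the set of times spent at the vertex,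
  as all its integrals over tails of this set vanish.\<close>
lemma velocity_zero_at_vertex: "AE \<tau> in lborel. \<tau> \<in> {0..1} \<and> X \<tau> = 0 \<longrightarrow> g \<tau> = 0"
proof -
  let ?Z = "{\<tau>\<in>{0..1}. X \<tau> = 0}"
  have mZ: "?Z \<in> sets borel" using vertex_times_closed by (rule borel_closed)
  have Z01: "?Z \<subseteq> {0..1}" by blast
  have coordinate: "AE \<tau> in lborel. indicator ?Z \<tau> * (g \<tau> \<bullet> b) = 0" for b :: "real^2"
  proof (rule ae_zero_of_tail_integrals)
    have eq: "(\<lambda>\<tau>. (indicator A \<tau> *\<^sub>R g \<tau>) \<bullet> b) = (\<lambda>\<tau>. indicator A \<tau> * (g \<tau> \<bullet> b))" for A
      by (simp only: inner_scaleR_left)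
    show "integrable lborel (\<lambda>\<tau>. indicator ?Z \<tau> * (g \<tau> \<bullet> b))"
      using integrable_inner_left[OF velocity_integrable_on[OF mZ Z01, unfolded set_integrable_def], of b]
      unfolding eq by blast
    fix x0
    have "{x0<..} \<inter> ?Z \<in> sets borel" "{x0<..} \<inter> ?Z \<subseteq> {0..1}" using mZ by auto
    then have W: "integrable lborel (\<lambda>\<tau>. indicator ({x0<..} \<inter> ?Z) \<tau> *\<^sub>R g \<tau>)"
      using velocity_integrable_on unfolding set_integrable_def by blast
    have "(\<lambda>\<tau>. indicator {x0<..} \<tau> *\<^sub>R (indicator ?Z \<tau> * (g \<tau> \<bullet> b)))
        = (\<lambda>\<tau>. (indicator ({x0<..} \<inter> ?Z) \<tau> *\<^sub>R g \<tau>) \<bullet> b)"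
      by (rule ext) (simp add: indicator_inter_arith inner_scaleR_left)
    then have "set_lebesgue_integral lborel {x0<..} (\<lambda>\<tau>. indicator ?Z \<tau> * (g \<tau> \<bullet> b))
        = set_lebesgue_integral lborel ({x0<..} \<inter> ?Z) g \<bullet> b"
      unfolding set_lebesgue_integral_def using integral_inner_left[OF W, of b] by simp
    then show "set_lebesgue_integral lborel {x0<..} (\<lambda>\<tau>. indicator ?Z \<tau> * (g \<tau> \<bullet> b)) = 0"
      using vertex_times_tail_integral by simp
  qed
  have "AE \<tau> in lborel. \<forall>b\<in>(Basis::(real^2) set). indicator ?Z \<tau> * (g \<tau> \<bullet> b) = 0"
    by (intro eventually_ball_finite ballI coordinate finite_Basis)
  then show ?thesis
  proof eventually_elim
    fix \<tau> assume h: "\<forall>b\<in>Basis. indicator ?Z \<tau> * (g \<tau> \<bullet> (b::real^2)) = 0"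
    show "\<tau> \<in> {0..1} \<and> X \<tau> = 0 \<longrightarrow> g \<tau> = 0"
      using h euclidean_all_zero_iff[of "g \<tau>"] by (auto simp: indicator_def)
  qed
qed

lemma affine_velocity_integral:
  assumes S: "S \<in> sets borel" "S \<subseteq> {0..1}"
  shows "set_integrable lborel S (\<lambda>\<tau>. c + d * (g \<tau> \<bullet> v))"
    and "set_lebesgue_integral lborel S (\<lambda>\<tau>. c + d * (g \<tau> \<bullet> v))
      = measure lborel S * c + d * (set_lebesgue_integral lborel S g \<bullet> v)"
proof -
  have fin: "emeasure lborel S < \<infinity>" using finite_measure_bounded[OF S] .
  have ic: "set_integrable lborel S (\<lambda>\<tau>. c)"
    unfolding set_integrable_def using S fin
    by (intro integrable_scaleR_left integrable_real_indicator) auto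
  have ig: "integrable lborel (\<lambda>\<tau>. indicator S \<tau> *\<^sub>R g \<tau>)"
    using velocity_integrable_on[OF S] unfolding set_integrable_def .
  have eq: "(\<lambda>\<tau>. indicator S \<tau> *\<^sub>R (d * (g \<tau> \<bullet> v))) = (\<lambda>\<tau>. d * ((indicator S \<tau> *\<^sub>R g \<tau>) \<bullet> v))"
    by (rule ext) (simp add: inner_scaleR_left)
  have igv: "set_integrable lborel S (\<lambda>\<tau>. d * (g \<tau> \<bullet> v))"
    unfolding set_integrable_def eq by (intro integrable_mult_right integrable_inner_left ig)
  show "set_integrable lborel S (\<lambda>\<tau>. c + d * (g \<tau> \<bullet> v))"
    by (rule set_integral_add(1)[OF ic igv])
  have "set_lebesgue_integral lborel S (\<lambda>\<tau>. d * (g \<tau> \<bullet> v)) = d * (set_lebesgue_integral lborel S g \<bullet> v)"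
    unfolding set_lebesgue_integral_def eq using integral_inner_left[OF ig, of v] by simp
  then show "set_lebesgue_integral lborel S (\<lambda>\<tau>. c + d * (g \<tau> \<bullet> v))
      = measure lborel S * c + d * (set_lebesgue_integral lborel S g \<bullet> v)"
    using set_integral_add(2)[OF ic igv] set_integral_const[of S lborel c] S fin by simp
qed

text \<open>Jensen's inequality on a branch: while X stays on J_k away from the vertex during
  (a, b), the cost there is at least (b - a) L_k of the mean velocity.\<close>
lemma ray_segment_bound:
  assumes ab: "0 \<le> a" "a < b" "b \<le> 1" and k: "k \<in> {1..N}"
    and on_ray: "\<forall>\<tau>\<in>{a<..<b}. X \<tau> \<in> ray e k \<and> X \<tau> \<noteq> 0"
    and cost: "set_integrable lborel {0..1} running_cost"
  shows "(b - a) * L k (((X b - X a) \<bullet> e k) / (b - a))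
    \<le> set_lebesgue_integral lborel {a<..<b} running_cost"
proof -
  define q where "q = ((X b - X a) \<bullet> e k) / (b - a)"
  obtain s where s: "\<And>p. L k q + s * (p - q) \<le> L k p" using supporting_line[OF k] by blast
  have S: "{a<..<b} \<in> sets borel" "{a<..<b} \<subseteq> {0..1}" using ab by auto
  have "set_lebesgue_integral lborel {a<..<b} (\<lambda>\<tau>. (L k q - s * q) + s * (g \<tau> \<bullet> e k))
      \<le> set_lebesgue_integral lborel {a<..<b} running_cost"
  proof (rule set_integral_mono[OF affine_velocity_integral(1)[OF S]])
    show "set_integrable lborel {a<..<b} running_cost"
      by (rule set_integrable_subset[OF cost]) (use S in auto)
    fix \<tau> assume "\<tau> \<in> {a<..<b}"
    then have "running_cost \<tau> = L k (g \<tau> \<bullet> e k)" using on_ray Lag_ray[OF k] by blast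
    then show "(L k q - s * q) + s * (g \<tau> \<bullet> e k) \<le> running_cost \<tau>"
      using s[of "g \<tau> \<bullet> e k"] by (simp add: algebra_simps)
  qed
  moreover have "set_lebesgue_integral lborel {a<..<b} (\<lambda>\<tau>. (L k q - s * q) + s * (g \<tau> \<bullet> e k))
      = (b - a) * L k q"
  proof -
    have "set_lebesgue_integral lborel {a<..<b} (\<lambda>\<tau>. (L k q - s * q) + s * (g \<tau> \<bullet> e k))
        = (b - a) * (L k q - s * q) + s * ((X b - X a) \<bullet> e k)"
      using affine_velocity_integral(2)[OF S, of "L k q - s * q" s "e k"]
        displacement[OF ab(1) less_imp_le[OF ab(2)] ab(3)] ab by simp
    also have "(X b - X a) \<bullet> e k = (b - a) * q" unfolding q_def using ab by simp
    finally show ?thesis by (simp add: algebra_simps)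
  qed
  ultimately show ?thesis unfolding q_def by simp
qed

definition excursions :: "real \<Rightarrow> real \<Rightarrow> nat \<Rightarrow> real set" where
  "excursions t1 t2 k = {\<tau>\<in>{t1<..<t2}. X \<tau> \<in> ray e k \<and> X \<tau> \<noteq> 0}"

text \<open>Excursions along a branch form an open set: they are the times in (t1, t2) at which
  X avoids the closed set formed by the vertex and the other branches.\<close>
lemma excursions_open:
  assumes "0 \<le> t1" "t2 \<le> 1" and k: "k \<in> {1..N}"
  shows "open (excursions t1 t2 k)"
proof -
  let ?B = "{0} \<union> (\<Union>m\<in>{1..N}-{k}. ray e m)"
  have "closed ?B" by (intro closed_Un closed_UN) (auto intro: ray_closed)
  moreover have "continuous_on {t1<..<t2} X"
    using path_continuous by (rule continuous_on_subset) (use assms in auto)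
  ultimately have "open ({t1<..<t2} \<inter> X -` (- ?B))"
    by (intro continuous_open_preimage) auto
  moreover have "excursions t1 t2 k = {t1<..<t2} \<inter> X -` (- ?B)"
  proof (intro equalityI subsetI)
    fix \<tau> assume "\<tau> \<in> excursions t1 t2 k"
    then show "\<tau> \<in> {t1<..<t2} \<inter> X -` (- ?B)"
      using rays_meet[OF _ k] unfolding excursions_def by blast
  next
    fix \<tau> assume \<tau>: "\<tau> \<in> {t1<..<t2} \<inter> X -` (- ?B)"
    then obtain m where "m \<in> {1..N}" "X \<tau> \<in> ray e m"
      using path_in_junction[of \<tau>] junction_ray assms by force
    then show "\<tau> \<in> excursions t1 t2 k" using \<tau> unfolding excursions_def by (cases "m = k") auto
  qed
  ultimately show ?thesis by simp
qed

text \<open>Between two visits of the vertex, the velocity integrates to zero over the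
  excursions along each branch, since X is at the vertex on their frontier.\<close>
lemma excursions_integral:
  assumes st: "0 \<le> t1" "t1 \<le> t2" "t2 \<le> 1" "X t1 = 0" "X t2 = 0" and k: "k \<in> {1..N}"
  shows "set_lebesgue_integral lborel (excursions t1 t2 k) g = 0"
proof (rule integral_zero_if_frontier_at_vertex)
  show "open (excursions t1 t2 k)" using excursions_open[OF st(1,3) k] .
  then show "excursions t1 t2 k \<subseteq> {0..1}" using st unfolding excursions_def by auto
  fix \<tau> assume \<tau>: "\<tau> \<in> frontier (excursions t1 t2 k)"
  have "continuous_on {t1..t2} X" using path_continuous by (rule continuous_on_subset) (use st in auto)
  then have "closed ({t1..t2} \<inter> X -` ray e k)"
    by (rule continuous_closed_preimage[OF _ closed_atLeastAtMost ray_closed[OF k]])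
  then have "closure (excursions t1 t2 k) \<subseteq> {t1..t2} \<inter> X -` ray e k"
    by (rule closure_minimal[rotated]) (auto simp: excursions_def)
  then show "X \<tau> = 0" using \<tau> excursions_open[OF st(1,3) k] st
    by (cases "\<tau> = t1 \<or> \<tau> = t2") (auto simp: frontier_def interior_open excursions_def)
qed

lemma excursion_sum_integral:
  fixes c :: "nat \<Rightarrow> real"
  assumes st: "0 \<le> t1" "t1 \<le> t2" "t2 \<le> 1" "X t1 = 0" "X t2 = 0"
  defines "h \<equiv> \<lambda>\<tau>. \<Sum>k\<in>{1..N}. indicator (excursions t1 t2 k) \<tau> * (c k * (g \<tau> \<bullet> e k))"
  shows "set_integrable lborel {t1..t2} h" and "set_lebesgue_integral lborel {t1..t2} h = 0"
proof -
  have summand: "set_integrable lborel {t1..t2} (\<lambda>\<tau>. indicator (excursions t1 t2 k) \<tau> * (c k * (g \<tau> \<bullet> e k)))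
      \<and> set_lebesgue_integral lborel {t1..t2}
          (\<lambda>\<tau>. indicator (excursions t1 t2 k) \<tau> * (c k * (g \<tau> \<bullet> e k))) = 0"
    if k: "k \<in> {1..N}" for k
  proof -
    let ?T = "excursions t1 t2 k"
    have eq: "(\<lambda>\<tau>. indicator {t1..t2} \<tau> *\<^sub>R (indicator ?T \<tau> * (c k * (g \<tau> \<bullet> e k))))
        = (\<lambda>\<tau>. c k * ((indicator ?T \<tau> *\<^sub>R g \<tau>) \<bullet> e k))"
      by (auto simp: indicator_def fun_eq_iff excursions_def)
    have "set_integrable lborel ?T g"
      using excursions_open[OF st(1,3) k] st
      by (intro velocity_integrable_on borel_open) (auto simp: excursions_def)
    then have ig: "integrable lborel (\<lambda>\<tau>. indicator ?T \<tau> *\<^sub>R g \<tau>)"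
      unfolding set_integrable_def .
    have "set_lebesgue_integral lborel {t1..t2} (\<lambda>\<tau>. indicator ?T \<tau> * (c k * (g \<tau> \<bullet> e k)))
        = c k * (set_lebesgue_integral lborel ?T g \<bullet> e k)"
      unfolding set_lebesgue_integral_def eq using integral_inner_left[OF ig, of "e k"] by simp
    moreover have "set_integrable lborel {t1..t2} (\<lambda>\<tau>. indicator ?T \<tau> * (c k * (g \<tau> \<bullet> e k)))"
      unfolding set_integrable_def eq by (intro integrable_mult_right integrable_inner_left ig)
    ultimately show ?thesis using excursions_integral[OF st k] by simp
  qed
  show "set_integrable lborel {t1..t2} h"
    unfolding set_integrable_def h_def scaleR_sum_right
    by (intro Bochner_Integration.integrable_sum) (use summand in \<open>auto simp: set_integrable_def\<close>)
  show "set_lebesgue_integral lborel {t1..t2} h = 0"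
    unfolding set_lebesgue_integral_def h_def scaleR_sum_right
    by (subst Bochner_Integration.integral_sum)
      (use summand in \<open>auto simp: set_integrable_def set_lebesgue_integral_def\<close>)
qed

text \<open>Between two visits of the vertex at t1 and t2 the cost is at least (t2 - t1) L0 0:
  on the excursions along branch k the running cost lies above a supporting line of L_k
  at 0, whose linear part integrates to zero, and at the vertex g vanishes a.e.\<close>
lemma vertex_phase_bound:
  assumes st: "0 \<le> t1" "t1 \<le> t2" "t2 \<le> 1" "X t1 = 0" "X t2 = 0"
    and cost: "set_integrable lborel {0..1} running_cost"
  shows "(t2 - t1) * L0 N L 0 \<le> set_lebesgue_integral lborel {t1..t2} running_cost"
proof -
  have "\<exists>s. \<forall>p. L k 0 + s * p \<le> L k p" if "k \<in> {1..N}" for k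
    using supporting_line[OF that, of 0] by (metis diff_zero)
  then obtain sl where sl: "\<And>k p. k \<in> {1..N} \<Longrightarrow> L k 0 + sl k * p \<le> L k p" by metis
  define h where "h \<tau> = (\<Sum>k\<in>{1..N}. indicator (excursions t1 t2 k) \<tau> * (sl k * (g \<tau> \<bullet> e k)))"
    for \<tau>
  note h_int = excursion_sum_integral(1)[OF st, of sl, folded h_def]
  note h_zero = excursion_sum_integral(2)[OF st, of sl, folded h_def]
  have h_on: "h \<tau> = sl k * (g \<tau> \<bullet> e k)" if k: "k \<in> {1..N}" and \<tau>: "\<tau> \<in> excursions t1 t2 k" for k \<tau>
  proof -
    have "\<tau> \<notin> excursions t1 t2 m" if "m \<in> {1..N} - {k}" for m
      using that \<tau> k rays_meet[of m k "X \<tau>"] unfolding excursions_def by auto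
    then have "(\<Sum>m\<in>{1..N}-{k}. indicator (excursions t1 t2 m) \<tau> * (sl m * (g \<tau> \<bullet> e m))) = 0"
      by simp
    moreover have "h \<tau> = indicator (excursions t1 t2 k) \<tau> * (sl k * (g \<tau> \<bullet> e k))
        + (\<Sum>m\<in>{1..N}-{k}. indicator (excursions t1 t2 m) \<tau> * (sl m * (g \<tau> \<bullet> e m)))"
      unfolding h_def using k by (intro sum.remove) auto
    ultimately show ?thesis using \<tau> by simp
  qed
  have below: "AE \<tau> in lborel. \<tau> \<in> {t1..t2} \<longrightarrow> L0 N L 0 + h \<tau> \<le> running_cost \<tau>"
    using velocity_zero_at_vertex
  proof eventually_elim
    fix \<tau> assume g0: "\<tau> \<in> {0..1} \<and> X \<tau> = 0 \<longrightarrow> g \<tau> = 0"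
    show "\<tau> \<in> {t1..t2} \<longrightarrow> L0 N L 0 + h \<tau> \<le> running_cost \<tau>"
    proof
      assume \<tau>: "\<tau> \<in> {t1..t2}"
      then have \<tau>01: "\<tau> \<in> {0..1}" using st by auto
      show "L0 N L 0 + h \<tau> \<le> running_cost \<tau>"
      proof (cases "X \<tau> = 0")
        case True
        then show ?thesis using g0 \<tau>01 unfolding h_def excursions_def by simp
      next
        case False
        obtain k where k: "k \<in> {1..N}" "X \<tau> \<in> ray e k"
          using path_in_junction[OF \<tau>01] junction_ray by blast
        have "\<tau> \<noteq> t1" "\<tau> \<noteq> t2" using False st by auto
        then have "\<tau> \<in> excursions t1 t2 k" using \<tau> k False unfolding excursions_def by auto
        then show ?thesis
          using h_on[OF k(1)] Lag_ray[OF k False, of "g \<tau>"] sl[OF k(1), of "g \<tau> \<bullet> e k"]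
            L0_le[OF k(1), of 0]
          by fastforce
      qed
    qed
  qed
  have const: "set_integrable lborel {t1..t2} (\<lambda>\<tau>. L0 N L 0)"
    unfolding set_integrable_def using st
    by (intro integrable_scaleR_left integrable_real_indicator) auto
  have "set_lebesgue_integral lborel {t1..t2} (\<lambda>\<tau>. L0 N L 0 + h \<tau>)
      \<le> set_lebesgue_integral lborel {t1..t2} running_cost"
    using set_integrable_subset[OF cost, of "{t1..t2}"] st below
    by (intro set_integral_mono_AE set_integral_add(1)[OF const h_int]) auto
  moreover have "set_lebesgue_integral lborel {t1..t2} (\<lambda>\<tau>. L0 N L 0 + h \<tau>) = (t2 - t1) * L0 N L 0"
    using set_integral_add(2)[OF const h_int] h_zero set_integral_const[of "{t1..t2}" lborel "L0 N L 0"] st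
    by simp
  ultimately show ?thesis by simp
qed

lemma first_leg_bound:
  assumes t1: "0 \<le> t1" "t1 \<le> 1" "X t1 = 0"
    and before: "\<And>\<tau>. 0 \<le> \<tau> \<Longrightarrow> \<tau> < t1 \<Longrightarrow> X \<tau> \<noteq> 0"
    and cost: "set_integrable lborel {0..1} running_cost"
  obtains v where "E1 N e L t1 y = ereal v"
    and "v + t1 * L0 N L 0 \<le> set_lebesgue_integral lborel {0<..<t1} running_cost"
proof (cases "y = 0")
  case True
  then have "t1 = 0" using before[of 0] path_start t1 by force
  then show ?thesis using that[of 0] True by (simp add: E1_def set_lebesgue_integral_def)
next
  case False
  then have t1p: "0 < t1" using t1 path_start by (metis le_less)
  have "{0..<t1} \<subseteq> {0..1}" "\<forall>\<tau>\<in>{0..<t1}. X \<tau> \<noteq> 0" using t1 before by auto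
  then obtain j where j: "j \<in> {1..N}" "\<forall>\<tau>\<in>{0..<t1}. X \<tau> \<in> ray e j"
    using single_ray[OF _ connected_Ico] by blast
  have "y \<in> ray e j" using j(2) t1p path_start by force
  then have "branch_idx N e y = j" by (rule branch_idx_eq[OF j(1) _ False])
  moreover have "(t1 - 0) * L j (((X t1 - X 0) \<bullet> e j) / (t1 - 0))
      \<le> set_lebesgue_integral lborel {0<..<t1} running_cost"
    using j before by (intro ray_segment_bound[OF _ t1p t1(2) j(1) _ cost]) auto
  ultimately show ?thesis
    using that[of "t1 * L j (- (y \<bullet> e j) / t1) - t1 * L0 N L 0"] False t1p t1 path_start
    by (simp add: E1_def Let_def)
qed

lemma last_leg_bound:
  assumes t2: "0 \<le> t2" "t2 \<le> 1" "X t2 = 0"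
    and after: "\<And>\<tau>. t2 < \<tau> \<Longrightarrow> \<tau> \<le> 1 \<Longrightarrow> X \<tau> \<noteq> 0"
    and cost: "set_integrable lborel {0..1} running_cost"
  obtains v where "E2 N e L t2 x = ereal v"
    and "v - t2 * L0 N L 0 \<le> set_lebesgue_integral lborel {t2<..<1} running_cost"
proof (cases "x = 0")
  case True
  then have "t2 = 1" using after[of 1] path_end t2 by force
  then show ?thesis using that[of "L0 N L 0"] True by (simp add: E2_def set_lebesgue_integral_def)
next
  case False
  then have t2p: "t2 < 1" using t2 path_end by (metis le_less)
  have "{t2<..1} \<subseteq> {0..1}" "\<forall>\<tau>\<in>{t2<..1}. X \<tau> \<noteq> 0" using t2 after by auto
  then obtain i where i: "i \<in> {1..N}" "\<forall>\<tau>\<in>{t2<..1}. X \<tau> \<in> ray e i"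
    using single_ray[OF _ connected_Ioc] by blast
  have "x \<in> ray e i" using i(2) t2p path_end by force
  then have "branch_idx N e x = i" by (rule branch_idx_eq[OF i(1) _ False])
  moreover have "(1 - t2) * L i (((X 1 - X t2) \<bullet> e i) / (1 - t2))
      \<le> set_lebesgue_integral lborel {t2<..<1} running_cost"
    using i after by (intro ray_segment_bound[OF t2(1) t2p _ i(1) _ cost]) auto
  ultimately show ?thesis
    using that[of "(1 - t2) * L i ((x \<bullet> e i) / (1 - t2)) + t2 * L0 N L 0"] False t2p t2 path_end
    by (simp add: E2_def Let_def)
qed

lemma straight_bound:
  assumes nz: "\<forall>t\<in>{0..1}. X t \<noteq> 0" and cost: "set_integrable lborel {0..1} running_cost"
  shows "Dstraight N e L y x \<le> ereal (set_lebesgue_integral lborel {0..1} running_cost)"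
proof -
  obtain k where k: "k \<in> {1..N}" "\<forall>t\<in>{0..1}. X t \<in> ray e k"
    using single_ray[OF _ _ nz] by auto
  have "y \<in> ray e k" "x \<in> ray e k" "y \<noteq> 0"
    using k nz path_start path_end by auto
  then have "Dstraight N e L y x = ereal (L k (x \<bullet> e k - y \<bullet> e k))"
    using Dstraight_ray[OF k(1)] by blast
  moreover have "(1 - 0) * L k (((X 1 - X 0) \<bullet> e k) / (1 - 0))
      \<le> set_lebesgue_integral lborel {0<..<1} running_cost"
    using k nz by (intro ray_segment_bound[OF _ _ _ k(1) _ cost]) auto
  ultimately show ?thesis
    using set_integral_Icc_Ioo[OF cost] path_start path_end by (simp add: inner_diff_left)
qed

text \<open>A path visiting the vertex costs at least D_junction: split at the first and last
  visit t1 <= t2 and combine the three bounds above.\<close>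
lemma junction_bound:
  assumes visits: "\<exists>t\<in>{0..1}. X t = 0" and cost: "set_integrable lborel {0..1} running_cost"
  shows "Djunction N e L y x \<le> ereal (set_lebesgue_integral lborel {0..1} running_cost)"
proof -
  let ?Z = "{\<tau>\<in>{0..1}. X \<tau> = 0}"
  have cZ: "closed ?Z" by (rule vertex_times_closed)
  have neZ: "?Z \<noteq> {}" using visits by blast
  have bZ: "bdd_below ?Z" "bdd_above ?Z" by (auto intro: bdd_belowI[of _ 0] bdd_aboveI[of _ 1])
  define t1 where "t1 = Inf ?Z"
  define t2 where "t2 = Sup ?Z"
  have "t1 \<in> ?Z" "t2 \<in> ?Z" unfolding t1_def t2_def
    using closed_contains_Inf[OF neZ bZ(1) cZ] closed_contains_Sup[OF neZ bZ(2) cZ] by auto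
  then have t: "0 \<le> t1" "t1 \<le> 1" "X t1 = 0" "0 \<le> t2" "t2 \<le> 1" "X t2 = 0" by auto
  have "t1 \<le> t2" unfolding t1_def using \<open>t2 \<in> ?Z\<close> bZ(1) by (rule cInf_lower)
  have "X \<tau> \<noteq> 0" if "0 \<le> \<tau>" "\<tau> < t1" for \<tau>
  proof
    assume "X \<tau> = 0"
    then have "\<tau> \<in> ?Z" using that t by auto
    then have "t1 \<le> \<tau>" unfolding t1_def by (rule cInf_lower[OF _ bZ(1)])
    then show False using that by simp
  qed
  then obtain v1 where v1: "E1 N e L t1 y = ereal v1"
    "v1 + t1 * L0 N L 0 \<le> set_lebesgue_integral lborel {0<..<t1} running_cost"
    using first_leg_bound[OF t(1-3) _ cost] by blast
  have "X \<tau> \<noteq> 0" if "t2 < \<tau>" "\<tau> \<le> 1" for \<tau>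
  proof
    assume "X \<tau> = 0"
    then have "\<tau> \<in> ?Z" using that t by auto
    then have "\<tau> \<le> t2" unfolding t2_def by (rule cSup_upper[OF _ bZ(2)])
    then show False using that by simp
  qed
  then obtain v2 where v2: "E2 N e L t2 x = ereal v2"
    "v2 - t2 * L0 N L 0 \<le> set_lebesgue_integral lborel {t2<..<1} running_cost"
    using last_leg_bound[OF t(4-6) _ cost] by blast
  have "(t2 - t1) * L0 N L 0 \<le> set_lebesgue_integral lborel {t1..t2} running_cost"
    by (rule vertex_phase_bound[OF t(1) \<open>t1 \<le> t2\<close> t(5) t(3) t(6) cost])
  moreover have "(t2 - t1) * L0 N L 0 = t2 * L0 N L 0 - t1 * L0 N L 0" by (simp add: algebra_simps)
  ultimately have total: "v1 + v2 \<le> set_lebesgue_integral lborel {0..1} running_cost"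
    using set_integral_split_three[OF cost t(1) \<open>t1 \<le> t2\<close> t(5)] v1(2) v2(2) by linarith
  have "Djunction N e L y x \<le> E1 N e L t1 y + E2 N e L t2 x"
    unfolding Djunction_def by (rule Inf_lower) (use t \<open>t1 \<le> t2\<close> in blast)
  also have "\<dots> = ereal (v1 + v2)" using v1(1) v2(1) by simp
  also have "\<dots> \<le> ereal (set_lebesgue_integral lborel {0..1} running_cost)" using total by simp
  finally show ?thesis .
qed

lemma cost_lower_bound:
  "min (Dstraight N e L y x) (Djunction N e L y x) \<le> path_cost N e L X g"
proof (cases "set_integrable lborel {0..1} running_cost")
  case True
  then have "path_cost N e L X g = ereal (set_lebesgue_integral lborel {0..1} running_cost)"
    unfolding path_cost_def by simp
  moreover have "min (Dstraight N e L y x) (Djunction N e L y x)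
      \<le> ereal (set_lebesgue_integral lborel {0..1} running_cost)"
  proof (cases "\<exists>t\<in>{0..1}. X t = 0")
    case False
    then show ?thesis using straight_bound[OF _ True] by (simp add: min.coboundedI1)
  qed (use junction_bound[OF _ True] in \<open>simp add: min.coboundedI2\<close>)
  ultimately show ?thesis by simp
qed (simp add: path_cost_def)

end

context junction_setting
begin

text \<open>To bound D0 by the cost of an explicit admissible path it suffices to know its
  running cost off a finite set P of times: on [0, 1] the running cost equals the given
  integrand plus point masses at P, which integrate to zero.\<close>
lemma D0_le_path:
  assumes adm: "admissible N e y x X g" and P: "finite P"
    and \<psi>: "set_integrable lborel {0..1} \<psi>"
    and eq: "\<And>\<tau>. \<tau> \<in> {0..1} \<Longrightarrow> \<tau> \<notin> P \<Longrightarrow> Lag N e L (X \<tau>) (g \<tau>) = \<psi> \<tau>"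
  shows "D0 N e L y x \<le> ereal (set_lebesgue_integral lborel {0..1} \<psi>)"
proof -
  let ?F = "\<lambda>\<tau>. Lag N e L (X \<tau>) (g \<tau>)"
  define corr where "corr \<tau> = (\<Sum>p\<in>P. indicator {p} \<tau> * (?F p - \<psi> p))" for \<tau>
  have F_eq: "?F \<tau> = \<psi> \<tau> + corr \<tau>" if "\<tau> \<in> {0..1}" for \<tau>
  proof (cases "\<tau> \<in> P")
    case True
    have "corr \<tau> = indicator {\<tau>} \<tau> * (?F \<tau> - \<psi> \<tau>) + (\<Sum>p\<in>P-{\<tau>}. indicator {p} \<tau> * (?F p - \<psi> p))"
      unfolding corr_def using True P by (intro sum.remove) auto
    also have "(\<Sum>p\<in>P-{\<tau>}. indicator {p} \<tau> * (?F p - \<psi> p)) = 0"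
      by (intro sum.neutral) (auto simp: indicator_def)
    finally show ?thesis by simp
  next
    case False
    then have "corr \<tau> = 0" unfolding corr_def by (intro sum.neutral) (auto simp: indicator_def)
    then show ?thesis using eq[OF that False] by simp
  qed
  have point: "set_integrable lborel {0..1} (\<lambda>\<tau>. indicator {p} \<tau> * c)
      \<and> set_lebesgue_integral lborel {0..1} (\<lambda>\<tau>. indicator {p} \<tau> * c) = 0" for p c :: real
  proof -
    have "measure lborel ({0..1} \<inter> {p}) = 0" "emeasure lborel ({0..1} \<inter> {p}) < \<infinity>"
      by (cases "p \<in> {0..1}"; simp)+
    then show ?thesis using set_integral_indicator_vector[of "{0..1}" "{p}" c] by simp
  qed
  have corr_int: "set_integrable lborel {0..1} corr"
    unfolding set_integrable_def corr_def scaleR_sum_right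
    by (intro Bochner_Integration.integrable_sum) (use point in \<open>simp add: set_integrable_def\<close>)
  have "set_lebesgue_integral lborel {0..1} corr
      = (\<Sum>p\<in>P. set_lebesgue_integral lborel {0..1} (\<lambda>\<tau>. indicator {p} \<tau> * (?F p - \<psi> p)))"
    unfolding set_lebesgue_integral_def corr_def scaleR_sum_right
    by (rule Bochner_Integration.integral_sum) (use point in \<open>simp add: set_integrable_def\<close>)
  also have "\<dots> = 0" by (intro sum.neutral ballI conjunct2[OF point])
  finally have corr_zero: "set_lebesgue_integral lborel {0..1} corr = 0" .
  have "set_integrable lborel {0..1} ?F"
    using set_integral_add(1)[OF \<psi> corr_int] by (rule set_integrable_cong[THEN iffD1, rotated -1])
      (use F_eq in auto)
  moreover have "set_lebesgue_integral lborel {0..1} ?F = set_lebesgue_integral lborel {0..1} \<psi>"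
    using set_integral_add(2)[OF \<psi> corr_int] corr_zero F_eq
    by (subst set_lebesgue_integral_cong[of _ _ _ "\<lambda>\<tau>. \<psi> \<tau> + corr \<tau>"]) auto
  ultimately have "path_cost N e L X g = ereal (set_lebesgue_integral lborel {0..1} \<psi>)"
    unfolding path_cost_def by simp
  moreover have "D0 N e L y x \<le> path_cost N e L X g"
    unfolding D0_def by (rule Inf_lower) (use adm in blast)
  ultimately show ?thesis by simp
qed

lemma branch_coordinate:
  assumes "z \<in> junction N e"
  shows "z = (z \<bullet> e (branch_idx N e z)) *\<^sub>R e (branch_idx N e z)"
    and "z \<noteq> 0 \<Longrightarrow> branch_idx N e z \<in> {1..N} \<and> z \<bullet> e (branch_idx N e z) > 0"
proof -
  have *: "branch_idx N e z \<in> {1..N} \<and> z = (z \<bullet> e (branch_idx N e z)) *\<^sub>R e (branch_idx N e z)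
      \<and> z \<bullet> e (branch_idx N e z) \<ge> 0" if "z \<noteq> 0"
    using junction_ray[OF assms] branch_idx_eq ray_mem that by metis
  show "z = (z \<bullet> e (branch_idx N e z)) *\<^sub>R e (branch_idx N e z)"
    using * by (cases "z = 0") auto
  show "z \<noteq> 0 \<Longrightarrow> branch_idx N e z \<in> {1..N} \<and> z \<bullet> e (branch_idx N e z) > 0"
    using * by (metis less_eq_real_def scale_zero_left)
qed

lemma route_pointwise:
  assumes yJ: "y \<in> junction N e" and xJ: "x \<in> junction N e"
    and ab: "0 \<le> a" "a \<le> b" "b \<le> 1" and ya: "a = 0 \<longleftrightarrow> y = 0" and xb: "b = 1 \<longleftrightarrow> x = 0"
    and \<tau>: "\<tau> \<in> {0..1}" "\<tau> \<notin> {0, a, b, 1}"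
  shows "route_position a b y x \<tau> \<in> junction N e
      \<and> route_velocity a b y x \<tau> \<in> adm_dir N e (route_position a b y x \<tau>)
      \<and> Lag N e L (route_position a b y x \<tau>) (route_velocity a b y x \<tau>)
        = (if \<tau> < a then L (branch_idx N e y) (- (y \<bullet> e (branch_idx N e y)) / a)
           else if \<tau> < b then L0 N L 0
           else L (branch_idx N e x) ((x \<bullet> e (branch_idx N e x)) / (1 - b)))"
proof -
  define j where "j = branch_idx N e y"
  define i where "i = branch_idx N e x"
  define p where "p = y \<bullet> e j"
  define q where "q = x \<bullet> e i"
  have y_eq: "y = p *\<^sub>R e j" and p: "y \<noteq> 0 \<Longrightarrow> j \<in> {1..N} \<and> 0 < p"
    using branch_coordinate[OF yJ] unfolding p_def j_def by auto
  have x_eq: "x = q *\<^sub>R e i" and q: "x \<noteq> 0 \<Longrightarrow> i \<in> {1..N} \<and> 0 < q"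
    using branch_coordinate[OF xJ] unfolding q_def i_def by auto
  have arrive: "y + a *\<^sub>R ((- 1 / a) *\<^sub>R y) = 0" using ya by (cases "y = 0") auto
  consider "\<tau> < a" | "a < \<tau>" "\<tau> < b" | "b < \<tau>" using \<tau> by fastforce
  then show ?thesis
  proof cases
    case 1
    then have "y \<noteq> 0" "0 < a" using ya \<tau> by auto
    then have jp: "j \<in> {1..N}" "0 < p" using p by auto
    have X: "route_position a b y x \<tau> = ((1 - \<tau> / a) * p) *\<^sub>R e j"
      and G: "route_velocity a b y x \<tau> = (- p / a) *\<^sub>R e j"
      using 1 \<tau> ab \<open>0 < a\<close> unfolding route_position_def route_velocity_def y_eq
      by (simp_all add: algebra_simps)
    have "0 < (1 - \<tau> / a) * p" using 1 \<open>0 < a\<close> jp by (simp add: field_simps)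
    note move = moving_on_ray(1)[OF jp(1) this] moving_on_ray(2,3)[OF jp(1) this, of "- p / a"]
    show ?thesis unfolding X G using move 1 unfolding p_def j_def by simp
  next
    case 2
    have "min \<tau> a = a" "max 0 (\<tau> - b) = 0" using 2 by auto
    then have "route_position a b y x \<tau> = 0"
      unfolding route_position_def using arrive by simp
    moreover have "route_velocity a b y x \<tau> = 0"
      using 2 unfolding route_velocity_def by simp
    moreover have "0 \<in> junction N e" using ray_junction[of 1 0] N1 by auto
    ultimately show ?thesis using 2 unfolding adm_dir_def by simp
  next
    case 3
    then have "x \<noteq> 0" "b < 1" using xb \<tau> by auto
    then have iq: "i \<in> {1..N}" "0 < q" using q by auto
    have "min \<tau> a = a" "max 0 (\<tau> - b) = \<tau> - b" using 3 ab by auto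
    then have "route_position a b y x \<tau> = (y + a *\<^sub>R ((- 1 / a) *\<^sub>R y)) + (\<tau> - b) *\<^sub>R ((1 / (1 - b)) *\<^sub>R x)"
      unfolding route_position_def by presburger
    also have "\<dots> = ((\<tau> - b) / (1 - b) * q) *\<^sub>R e i"
      unfolding arrive by (simp add: x_eq)
    finally have X: "route_position a b y x \<tau> = ((\<tau> - b) / (1 - b) * q) *\<^sub>R e i" .
    have G: "route_velocity a b y x \<tau> = (q / (1 - b)) *\<^sub>R e i"
      using 3 ab unfolding route_velocity_def x_eq by (simp add: indicator_def)
    have "0 < (\<tau> - b) / (1 - b) * q" using 3 \<open>b < 1\<close> iq by simp
    note move = moving_on_ray(1)[OF iq(1) this] moving_on_ray(2,3)[OF iq(1) this, of "q / (1 - b)"]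
    show ?thesis unfolding X G using move 3 ab unfolding q_def i_def by simp
  qed
qed

lemma D0_le_route:
  assumes yJ: "y \<in> junction N e" and xJ: "x \<in> junction N e"
    and ab: "0 \<le> a" "a \<le> b" "b \<le> 1" and ya: "a = 0 \<longleftrightarrow> y = 0" and xb: "b = 1 \<longleftrightarrow> x = 0"
  shows "D0 N e L y x \<le> ereal (a * L (branch_idx N e y) (- (y \<bullet> e (branch_idx N e y)) / a)
      + (b - a) * L0 N L 0 + (1 - b) * L (branch_idx N e x) ((x \<bullet> e (branch_idx N e x)) / (1 - b)))"
proof -
  let ?X = "route_position a b y x" and ?g = "route_velocity a b y x"
  let ?j = "branch_idx N e y" and ?i = "branch_idx N e x"
  note route = route_primitive[OF ab ya xb]
  note pointwise = route_pointwise[OF yJ xJ ab ya xb]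
  have moves: "?X \<tau> \<in> junction N e \<and> ?g \<tau> \<in> adm_dir N e (?X \<tau>)"
    if "\<tau> \<in> {0..1}" "\<tau> \<notin> {0, a, b, 1}" for \<tau>
    using pointwise[OF that] by (elim conjE) (intro conjI)
  have adm: "admissible N e y x ?X ?g"
    unfolding admissible_def
  proof (intro conjI)
    show "?X 0 = y" "?X 1 = x" "set_integrable lborel {0..1} ?g"
      "\<forall>t\<in>{0..1}. ?X t = ?X 0 + set_lebesgue_integral lborel {0..t} ?g"
      by (fact route)+
    have "AE \<tau> in lborel. \<tau> \<notin> {0, a, b, 1}"
      by (intro AE_not_in finite_imp_null_set_lborel) simp
    then show "AE \<tau> in lborel. \<tau> \<in> {0..1} \<longrightarrow> ?X \<tau> \<in> junction N e \<and> ?g \<tau> \<in> adm_dir N e (?X \<tau>)"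
      by eventually_elim (use moves in blast)
  qed
  define c1 where "c1 = L ?j (- (y \<bullet> e ?j) / a)"
  define c3 where "c3 = L ?i ((x \<bullet> e ?i) / (1 - b))"
  define \<psi> where "\<psi> \<tau> = indicator {0<..<a} \<tau> * c1 + indicator {a<..<b} \<tau> * L0 N L 0
      + indicator {b<..<1} \<tau> * c3" for \<tau> :: real
  have cost: "Lag N e L (?X \<tau>) (?g \<tau>) = \<psi> \<tau>" if \<tau>: "\<tau> \<in> {0..1}" "\<tau> \<notin> {0, a, b, 1}" for \<tau>
  proof -
    consider "\<tau> < a" | "a < \<tau>" "\<tau> < b" | "b < \<tau>" using \<tau> by fastforce
    then show ?thesis
      using conjunct2[OF conjunct2[OF pointwise[OF \<tau>]]] \<tau> ab unfolding \<psi>_def c1_def c3_def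
      by cases simp_all
  qed
  have piece: "set_integrable lborel {0..1} (indicator {l<..<r} :: real \<Rightarrow> real)
      \<and> set_lebesgue_integral lborel {0..1} (indicator {l<..<r}) = r - l"
    if "0 \<le> l" "l \<le> r" "r \<le> 1" for l r :: real
  proof -
    have "{0..1} \<inter> {l<..<r} = {l<..<r}" using that by auto
    then show ?thesis using set_integral_indicator_vector[of "{0..1}" "{l<..<r}" "1::real"] that by simp
  qed
  have i: "set_integrable lborel {0..1} (\<lambda>\<tau>. indicator {l<..<r} \<tau> * c)"
    if "0 \<le> l" "l \<le> r" "r \<le> 1" for l r c :: real
    using piece[OF that] by (intro set_integrable_mult_left) auto
  have "set_integrable lborel {0..1} \<psi>"
    unfolding \<psi>_def using ab by (intro set_integral_add(1) i) auto
  then have "D0 N e L y x \<le> ereal (set_lebesgue_integral lborel {0..1} \<psi>)"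
    using cost by (intro D0_le_path[OF adm, of "{0, a, b, 1}"]) auto
  moreover have "set_lebesgue_integral lborel {0..1} \<psi> = a * c1 + (b - a) * L0 N L 0 + (1 - b) * c3"
    unfolding \<psi>_def using ab piece[of 0 a] piece[of a b] piece[of b 1]
    by (simp add: set_integral_add(2) i)
  ultimately show ?thesis unfolding c1_def c3_def by simp
qed

lemma D0_le_straight_path:
  assumes k: "k \<in> {1..N}" "y \<in> ray e k" "x \<in> ray e k" and nz: "\<not> (y = 0 \<and> x = 0)"
  shows "D0 N e L y x \<le> ereal (L k (x \<bullet> e k - y \<bullet> e k))"
proof -
  define p where "p = y \<bullet> e k"
  define q where "q = x \<bullet> e k"
  have yx: "y = p *\<^sub>R e k" "x = q *\<^sub>R e k" "0 \<le> p" "0 \<le> q"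
    using ray_mem[OF k(1)] k unfolding p_def q_def by auto
  then have pq: "0 < p \<or> 0 < q" using nz by fastforce
  define X where "X \<tau> = y + \<tau> *\<^sub>R (x - y)" for \<tau> :: real
  define g where "g \<tau> = (q - p) *\<^sub>R e k" for \<tau> :: real
  have g_int: "set_integrable lborel S g"
    and g_integral: "set_lebesgue_integral lborel S g = measure lborel S *\<^sub>R (x - y)"
    if S: "S \<in> sets borel" "S \<subseteq> {0..1}" for S
  proof -
    have fin: "emeasure lborel (S \<inter> UNIV) < \<infinity>"
      using S by (intro finite_measure_bounded[of _ 0 1]) auto
    have "g = (\<lambda>\<tau>. indicator UNIV \<tau> *\<^sub>R (x - y))"
      unfolding g_def yx by (simp add: algebra_simps)
    then show "set_integrable lborel S g" "set_lebesgue_integral lborel S g = measure lborel S *\<^sub>R (x - y)"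
      using set_integral_indicator_vector[OF S(1) _ fin] by simp_all
  qed
  have pointwise: "X \<tau> \<in> junction N e \<and> g \<tau> \<in> adm_dir N e (X \<tau>)
      \<and> Lag N e L (X \<tau>) (g \<tau>) = L k (q - p)"
    if "\<tau> \<in> {0..1}" "\<tau> \<notin> {0, 1}" for \<tau>
  proof -
    have "X \<tau> = ((1 - \<tau>) * p + \<tau> * q) *\<^sub>R e k"
      unfolding X_def yx by (simp add: algebra_simps)
    moreover have "0 < (1 - \<tau>) * p + \<tau> * q"
      using that yx pq by (auto intro: add_pos_nonneg add_nonneg_pos)
    ultimately show ?thesis using moving_on_ray[OF k(1)] unfolding g_def by simp
  qed
  have adm: "admissible N e y x X g"
    unfolding admissible_def
  proof (intro conjI)
    show "set_integrable lborel {0..1} g" by (rule g_int) auto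
    show "X 0 = y" "X 1 = x" unfolding X_def by simp_all
    show "\<forall>t\<in>{0..1}. X t = X 0 + set_lebesgue_integral lborel {0..t} g"
      using g_integral by (simp add: X_def)
    have "AE \<tau> in lborel. \<tau> \<notin> {0, 1}"
      by (intro AE_not_in finite_imp_null_set_lborel) simp
    then show "AE \<tau> in lborel. \<tau> \<in> {0..1} \<longrightarrow> X \<tau> \<in> junction N e \<and> g \<tau> \<in> adm_dir N e (X \<tau>)"
      by eventually_elim (use pointwise in blast)
  qed
  have const: "set_integrable lborel {0..1} (\<lambda>\<tau>::real. L k (q - p))"
    unfolding set_integrable_def
    by (intro integrable_scaleR_left integrable_real_indicator) auto
  have "D0 N e L y x \<le> ereal (set_lebesgue_integral lborel {0..1} (\<lambda>\<tau>::real. L k (q - p)))"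
    by (rule D0_le_path[OF adm _ const, of "{0, 1}"]) (use pointwise in auto)
  then show ?thesis
    using set_integral_const[of "{0..1::real}" lborel "L k (q - p)"] unfolding p_def q_def by simp
qed

text \<open>Upper bound by each value E1 + E2 in the infimum defining D_junction: the route
  through the vertex, where the leg of an end point at the vertex has zero duration.\<close>
lemma D0_le_junction_route:
  assumes yJ: "y \<in> junction N e" and xJ: "x \<in> junction N e"
    and \<tau>: "0 \<le> \<tau>1" "\<tau>1 \<le> \<tau>2" "\<tau>2 \<le> 1"
  shows "D0 N e L y x \<le> E1 N e L \<tau>1 y + E2 N e L \<tau>2 x"
proof (cases "(y \<noteq> 0 \<and> \<tau>1 = 0) \<or> (x \<noteq> 0 \<and> \<tau>2 = 1)")
  case True
  then have "E1 N e L \<tau>1 y = \<infinity> \<or> E2 N e L \<tau>2 x = \<infinity>"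
    unfolding E1_def E2_def by auto
  moreover have "E1 N e L \<tau>1 y \<noteq> - \<infinity>" "E2 N e L \<tau>2 x \<noteq> - \<infinity>"
    unfolding E1_def E2_def Let_def by auto
  ultimately show ?thesis by auto
next
  case False
  define a where "a = (if y = 0 then 0 else \<tau>1)"
  define b where "b = (if x = 0 then 1 else \<tau>2)"
  let ?j = "branch_idx N e y" and ?i = "branch_idx N e x"
  have "D0 N e L y x \<le> ereal (a * L ?j (- (y \<bullet> e ?j) / a)
      + (b - a) * L0 N L 0 + (1 - b) * L ?i ((x \<bullet> e ?i) / (1 - b)))"
    using False \<tau> unfolding a_def b_def by (intro D0_le_route[OF yJ xJ]) auto
  also have "\<dots> = E1 N e L \<tau>1 y + E2 N e L \<tau>2 x"
    using False unfolding a_def b_def E1_def E2_def Let_def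
    by (cases "y = 0"; cases "x = 0") (simp_all add: algebra_simps)
  finally show ?thesis .
qed

lemma D0_le_Dstraight:
  assumes yJ: "y \<in> junction N e" and xJ: "x \<in> junction N e"
  shows "D0 N e L y x \<le> Dstraight N e L y x"
proof (cases "y = 0 \<and> x = 0")
  case True
  then have "D0 N e L y x \<le> E1 N e L 0 y + E2 N e L 1 x"
    using yJ xJ by (intro D0_le_junction_route) auto
  then show ?thesis using True unfolding Dstraight_def E1_def E2_def by simp
next
  case nz: False
  show ?thesis
  proof (cases "\<exists>i\<in>{1..N}. y \<in> ray e i \<and> x \<in> ray e i")
    case True
    then show ?thesis using D0_le_straight_path Dstraight_ray nz by metis
  next
    case False
    then have "Dstraight N e L y x = \<infinity>" using nz unfolding Dstraight_def by auto
    then show ?thesis by simp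
  qed
qed

lemma D0_le_Djunction:
  assumes "y \<in> junction N e" and "x \<in> junction N e"
  shows "D0 N e L y x \<le> Djunction N e L y x"
  unfolding Djunction_def using D0_le_junction_route[OF assms] by (intro Inf_greatest) blast

lemma D0_lower: "min (Dstraight N e L y x) (Djunction N e L y x) \<le> D0 N e L y x"
  unfolding D0_def
proof (rule Inf_greatest)
  fix c assume "c \<in> {path_cost N e L X g | X g. admissible N e y x X g}"
  then obtain X g where c: "c = path_cost N e L X g" and adm: "admissible N e y x X g" by blast
  interpret admissible_path N e L \<gamma> y x X g
    using adm by (intro admissible_path.intro junction_setting_axioms admissible_path_axioms.intro)
  show "min (Dstraight N e L y x) (Djunction N e L y x) \<le> c"
    using cost_lower_bound c by simp
qed

end

theorem mainTheorem15:
  fixes N :: nat and e :: "nat \<Rightarrow> real^2" and L :: "nat \<Rightarrow> real \<Rightarrow> real"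
    and \<gamma> :: real and x y :: "real^2"
  assumes "N \<ge> 1"
    and "inj_on e {1..N}"
    and "\<forall>i\<in>{1..N}. norm (e i) = 1"
    and "\<gamma> > 0"
    and "\<forall>i\<in>{1..N}. \<exists>L1 L2. continuous_on UNIV L2 \<and>
           (\<forall>p. (L i has_real_derivative L1 p) (at p) \<and>
                (L1 has_real_derivative L2 p) (at p) \<and> L2 p \<ge> \<gamma>)"
    and "x \<in> junction N e" and "y \<in> junction N e"
  shows "D0 N e L y x = min (Dstraight N e L y x) (Djunction N e L y x)"
proof -
  interpret junction_setting N e L \<gamma>
    using assms(1-5) by unfold_locales
  have "D0 N e L y x \<le> Dstraight N e L y x" "D0 N e L y x \<le> Djunction N e L y x"
    using D0_le_Dstraight D0_le_Djunction assms(6,7) by blast+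
  then show ?thesis using D0_lower by (simp add: antisym)
qed

end
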